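(* Let $M\in\mathbb{N}^*$, $\mathcal{L}_M=\{0,\dots,M\}$, $x_0\in\mathcal{L}_M$, $y_0\in\mathbb{N}$. Let $\lambda:\mathbb{R}_+\times\mathcal{L}_M\to\mathbb{R}_+$ be such that $t\mapsto\lambda(t,x)$ is càdlàg for every $x$, $\lambda(t,M)=0$ for all $t$, and $\lambda$ is bounded on $[0,T]\times\mathcal{L}_M$ for every $T>0$. Let $f:\mathbb{R}\to\mathbb{R}$ be continuous with $0<\underline{f}\le f\le\bar f<\infty$. Let $(\mu^k_{ij})_{i,j\ge0}$, $k\in\mathcal{L}_M$, satisfy $\mu^k_{ij}\ge0$ for $i\ne j$, $\mu^k_{ii}\le0$, $\sum_{j\ge0}\mu^k_{ij}=0$, and $\sup_i|\mu^k_{ii}|<\infty$ for each $k$. Then the equation $P'(t)=\Psi(t,(P(t))_+)$, $P(0)=P_0$, admits a unique solution on $\mathbb{R}_+$ (with values in the summable families), and this solution satisfies $P(t)\ge0$ componentwise and $|P(t)|=1$ for all $t\ge0$.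
   Context: Let $E$ be the set of real families $u=(u^i_j)_{0\le i\le M,\,j\ge0}$, $E_+$ the subset with all entries $\ge0$, $E_+^*$ the subset with all entries $>0$, and $|u|=\sum_{i=0}^M\sum_{j\ge0}|u^i_j|$. For $x\in E$, $(x)_+$ denotes the componentwise positive part. $P_0$ is given by $(P_0)^{x_0}_{y_0}=1$ and all other entries $0$. For $x\in E_+$ set $\varphi(x,i)=\frac{\sum_{l\ge0}f(l)x^i_l}{\sum_{l\ge0}x^i_l}$ and $$(\Psi(t,x))^i_j=\sum_{k\ge0}\mu^i_{kj}x^i_k+\mathbf{1}_{\{i\ge1\}}\frac{\lambda(t,i-1)}{\varphi(x,i-1)}f(j)x^{i-1}_j-\mathbf{1}_{\{i\le M-1\}}\frac{\lambda(t,i)}{\varphi(x,i)}f(j)x^i_j,$$ with the convention that $\frac{x^i_j}{\varphi(x,i)}=0$ when $x^i_l=0$ for all $l$ (continuous extension from $E_+^*$). *)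

theory Defs
  imports "HOL-Analysis.Analysis"
begin

text \<open>Families u = (u^i_j), 0 <= i <= M, j >= 0, are represented as functions
  nat => nat => real; only the entries with i <= M are meaningful, and elements of E
  (inside solutions) are required to vanish for i > M.\<close>

type_synonym family = "nat \<Rightarrow> nat \<Rightarrow> real"

definition summable_family :: "nat \<Rightarrow> family \<Rightarrow> bool" where
  "summable_family M u \<longleftrightarrow> (\<forall>i\<le>M. summable (\<lambda>j. \<bar>u i j\<bar>))"

definition l1norm :: "nat \<Rightarrow> family \<Rightarrow> real" where
  "l1norm M u = (\<Sum>i\<le>M. (\<Sum>j. \<bar>u i j\<bar>))"

definition pos_part :: "family \<Rightarrow> family" where
  "pos_part x = (\<lambda>i j. max 0 (x i j))"

definition P0 :: "nat \<Rightarrow> nat \<Rightarrow> family" where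
  "P0 x0 y0 = (\<lambda>i j. if i = x0 \<and> j = y0 then 1 else 0)"

definition phi :: "(real \<Rightarrow> real) \<Rightarrow> family \<Rightarrow> nat \<Rightarrow> real" where
  "phi f x i = (\<Sum>l. f (real l) * x i l) / (\<Sum>l. x i l)"

definition ratio :: "(real \<Rightarrow> real) \<Rightarrow> family \<Rightarrow> nat \<Rightarrow> nat \<Rightarrow> real" where
  "ratio f x i j = (if (\<forall>l. x i l = 0) then 0 else x i j / phi f x i)"

text \<open>mu k i j stands for mu^k_{ij}; lam t i for lambda(t,i).\<close>
definition Psi :: "nat \<Rightarrow> (real \<Rightarrow> nat \<Rightarrow> real) \<Rightarrow> (real \<Rightarrow> real)
     \<Rightarrow> (nat \<Rightarrow> nat \<Rightarrow> nat \<Rightarrow> real) \<Rightarrow> real \<Rightarrow> family \<Rightarrow> family" where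
  "Psi M lam f mu t x = (\<lambda>i j.
      (\<Sum>k. mu i k j * x i k)
      + (if 1 \<le> i then lam t (i - 1) * f (real j) * ratio f x (i - 1) j else 0)
      - (if i \<le> M - 1 then lam t i * f (real j) * ratio f x i j else 0))"

definition cadlag_on_nonneg :: "(real \<Rightarrow> real) \<Rightarrow> bool" where
  "cadlag_on_nonneg g \<longleftrightarrow>
     (\<forall>t\<ge>0. continuous (at_right t) g) \<and>
     (\<forall>t>0. \<exists>l. (g \<longlongrightarrow> l) (at_left t))"

text \<open>Solution of P' = Psi(t,(P)_+), P(0) = P0 on R_+, understood in integral
  (mild) form: P is a continuous E-valued map (for the l1 norm), and every
  component satisfies P(t) = P0 + int_0^t Psi(s,(P(s))_+) ds.\<close>
definition is_solution :: "nat \<Rightarrow> (real \<Rightarrow> nat \<Rightarrow> real) \<Rightarrow> (real \<Rightarrow> real)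
     \<Rightarrow> (nat \<Rightarrow> nat \<Rightarrow> nat \<Rightarrow> real) \<Rightarrow> nat \<Rightarrow> nat \<Rightarrow> (real \<Rightarrow> family) \<Rightarrow> bool" where
  "is_solution M lam f mu x0 y0 P \<longleftrightarrow>
     (\<forall>t\<ge>0. \<forall>i j. M < i \<longrightarrow> P t i j = 0) \<and>
     (\<forall>t\<ge>0. summable_family M (P t)) \<and>
     (\<forall>t\<ge>0. ((\<lambda>s. l1norm M (\<lambda>i j. P s i j - P t i j)) \<longlongrightarrow> 0) (at t within {0..})) \<and>
     (\<forall>t\<ge>0. \<forall>i\<le>M. \<forall>j.
        ((\<lambda>s. Psi M lam f mu s (pos_part (P s)) i j) has_integral (P t i j - P0 x0 y0 i j)) {0..t})"

end

theory Submission
  imports Defs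
begin

text \<open>
  On a bounded time interval the right-hand side u |-> Psi(t,(u)_+) is globally Lipschitz for
  the l1 norm: the mu-part because row i of mu^k has absolute sum -2 mu^k_ii, and the
  transfer part because a nonnegative row x |-> x / phi(x) is Lipschitz, f being bounded
  between two positive constants. Picard iteration therefore converges with factorial bounds,
  which gives existence, and the same Gronwall-type bound gives uniqueness. Positivity holds
  because a component can only decrease through its own outflow, which vanishes when the
  component is nonpositive; the total mass is conserved because the entries of Psi sum to zero
  (the rows of mu sum to zero, and what leaves level i enters level i+1).
\<close>

section \<open>The l1 norm on families\<close>

abbreviation l1dist :: "nat \<Rightarrow> family \<Rightarrow> family \<Rightarrow> real" where
  "l1dist M x y \<equiv> l1norm M (\<lambda>i j. x i j - y i j)"

lemma l1norm_nonneg: "summable_family M u \<Longrightarrow> 0 \<le> l1norm M u"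
  unfolding l1norm_def summable_family_def by (intro sum_nonneg suminf_nonneg) auto

lemma suminf_abs_row_le_l1norm:
  assumes "summable_family M u" "i \<le> M"
  shows "(\<Sum>k. \<bar>u i k\<bar>) \<le> l1norm M u"
  using assms unfolding l1norm_def summable_family_def
  by (intro member_le_sum suminf_nonneg) auto

lemma abs_le_l1norm:
  assumes "summable_family M u" "i \<le> M"
  shows "\<bar>u i j\<bar> \<le> l1norm M u"
proof -
  have "\<bar>u i j\<bar> \<le> (\<Sum>k. \<bar>u i k\<bar>)"
    using assms sum_le_suminf[of "\<lambda>k. \<bar>u i k\<bar>" "{j}"] unfolding summable_family_def by auto
  with suminf_abs_row_le_l1norm[OF assms] show ?thesis by linarith
qed

lemma abs_le_partial_sums:
  fixes u :: family
  assumes "i \<le> M"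
  shows "\<bar>u i j\<bar> \<le> (\<Sum>i\<le>M. \<Sum>j'<Suc j. \<bar>u i j'\<bar>)"
proof -
  have "\<bar>u i j\<bar> \<le> (\<Sum>j'<Suc j. \<bar>u i j'\<bar>)" by (intro member_le_sum) auto
  also have "\<dots> \<le> (\<Sum>i\<le>M. \<Sum>j'<Suc j. \<bar>u i j'\<bar>)"
    using assms by (intro member_le_sum) (auto intro: sum_nonneg)
  finally show ?thesis .
qed

lemma partial_sums_le_l1norm:
  assumes "summable_family M u"
  shows "(\<Sum>i\<le>M. \<Sum>j<J. \<bar>u i j\<bar>) \<le> l1norm M u"
  unfolding l1norm_def
  using assms unfolding summable_family_def by (intro sum_mono sum_le_suminf) auto

lemma
  assumes "\<And>J. (\<Sum>i\<le>M. \<Sum>j<J. \<bar>u i j\<bar>) \<le> C"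
  shows summable_family_if_partial_sums_le: "summable_family M u"
    and l1norm_le_if_partial_sums_le: "l1norm M u \<le> C"
proof -
  have row: "summable (\<lambda>j. \<bar>u i j\<bar>)" if "i \<le> M" for i
  proof (rule summableI_nonneg_bounded)
    fix J
    have "(\<Sum>j<J. \<bar>u i j\<bar>) \<le> (\<Sum>i\<le>M. \<Sum>j<J. \<bar>u i j\<bar>)"
      using that by (intro member_le_sum) (auto intro: sum_nonneg)
    then show "(\<Sum>j<J. \<bar>u i j\<bar>) \<le> C" using assms[of J] by linarith
  qed auto
  then show "summable_family M u" unfolding summable_family_def by auto
  have "(\<lambda>J. \<Sum>i\<le>M. \<Sum>j<J. \<bar>u i j\<bar>) \<longlonglongrightarrow> l1norm M u"
    unfolding l1norm_def by (intro tendsto_sum summable_LIMSEQ row) auto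
  then show "l1norm M u \<le> C" by (rule LIMSEQ_le_const2) (use assms in auto)
qed

lemma
  assumes "summable_family M a" "summable_family M b"
    and "\<And>i j. i \<le> M \<Longrightarrow> \<bar>u i j\<bar> \<le> \<bar>a i j\<bar> + \<bar>b i j\<bar>"
  shows summable_family_dominated: "summable_family M u"
    and l1norm_le_add_if_dominated: "l1norm M u \<le> l1norm M a + l1norm M b"
proof -
  have "(\<Sum>i\<le>M. \<Sum>j<J. \<bar>u i j\<bar>) \<le> l1norm M a + l1norm M b" for J
  proof -
    have "(\<Sum>i\<le>M. \<Sum>j<J. \<bar>u i j\<bar>) \<le> (\<Sum>i\<le>M. \<Sum>j<J. \<bar>a i j\<bar> + \<bar>b i j\<bar>)"
      using assms(3) by (intro sum_mono) auto
    also have "\<dots> = (\<Sum>i\<le>M. \<Sum>j<J. \<bar>a i j\<bar>) + (\<Sum>i\<le>M. \<Sum>j<J. \<bar>b i j\<bar>)"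
      by (simp add: sum.distrib)
    also have "\<dots> \<le> l1norm M a + l1norm M b"
      by (intro add_mono partial_sums_le_l1norm assms(1,2))
    finally show ?thesis .
  qed
  then show "summable_family M u" "l1norm M u \<le> l1norm M a + l1norm M b"
    by (auto intro: summable_family_if_partial_sums_le l1norm_le_if_partial_sums_le)
qed

lemma summable_family_diff:
  assumes "summable_family M a" "summable_family M b"
  shows "summable_family M (\<lambda>i j. a i j - b i j)"
  by (rule summable_family_dominated[OF assms]) auto

lemma summable_family_zero: "summable_family M (\<lambda>i j. 0)"
  unfolding summable_family_def by simp

lemma l1dist_commute: "l1dist M a b = l1dist M b a"
  unfolding l1norm_def by (simp add: abs_minus_commute)

lemma l1dist_triangle:
  assumes "summable_family M a" "summable_family M b" "summable_family M c"
  shows "l1dist M a c \<le> l1dist M a b + l1dist M b c"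
  by (rule l1norm_le_add_if_dominated[OF summable_family_diff[OF assms(1,2)]
        summable_family_diff[OF assms(2,3)]]) auto

lemma abs_l1norm_diff_le:
  assumes "summable_family M a" "summable_family M b"
  shows "\<bar>l1norm M a - l1norm M b\<bar> \<le> l1dist M a b"
proof -
  have "l1norm M a \<le> l1norm M b + l1dist M a b"
    by (rule l1norm_le_add_if_dominated[OF assms(2) summable_family_diff[OF assms]]) auto
  moreover have "l1norm M b \<le> l1norm M a + l1dist M b a"
    by (rule l1norm_le_add_if_dominated[OF assms(1) summable_family_diff[OF assms(2,1)]]) auto
  ultimately show ?thesis using l1dist_commute[of M a b] by linarith
qed

lemma summable_abs_row_diff:
  fixes x y :: family
  assumes "summable (\<lambda>k. \<bar>x i k\<bar>)" "summable (\<lambda>k. \<bar>y i k\<bar>)"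
  shows "summable (\<lambda>k. \<bar>x i k - y i k\<bar>)"
  by (rule summable_comparison_test'[OF summable_add[OF assms]]) auto

lemma partial_sums_tendsto_l1norm:
  assumes "summable_family M u" "\<And>i j. 0 \<le> u i j"
  shows "(\<lambda>J. \<Sum>i\<le>M. \<Sum>j<J. u i j) \<longlonglongrightarrow> l1norm M u"
  unfolding l1norm_def
  using assms unfolding summable_family_def by (intro tendsto_sum) (simp add: summable_LIMSEQ)

lemma summable_family_P0: "summable_family M (P0 x0 y0)"
  unfolding summable_family_def P0_def by (auto intro: summable_finite[of "{y0}"])

lemma l1norm_P0: "x0 \<le> M \<Longrightarrow> l1norm M (P0 x0 y0) = 1"
proof -
  have "(\<lambda>j. \<bar>P0 x0 y0 i j\<bar>) sums (if i = x0 then 1 else 0)" for i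
    using sums_single[of y0 "\<lambda>_. if i = x0 then 1 else (0::real)"]
    by (simp add: P0_def if_distrib cong: if_cong)
  then show "x0 \<le> M \<Longrightarrow> ?thesis" unfolding l1norm_def by (simp add: sums_iff)
qed

lemma P0_nonneg: "0 \<le> P0 x0 y0 i j"
  unfolding P0_def by simp

lemma P0_vanishes: "x0 \<le> M \<Longrightarrow> M < i \<Longrightarrow> P0 x0 y0 i j = 0"
  unfolding P0_def by auto

lemma abs_quotient_diff_le:
  fixes Sx Sy Fx Fy D c C :: real
  assumes c: "0 < c" and Sy: "0 < Sy" and le: "Sy \<le> Sx"
    and Fx: "c * Sx \<le> Fx" and Fy: "c * Sy \<le> Fy"
    and dS: "\<bar>Sx - Sy\<bar> \<le> D" and dF: "\<bar>Fx - Fy\<bar> \<le> C * D" and C: "0 \<le> C"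
  shows "Sy * \<bar>Sx / Fx - Sy / Fy\<bar> \<le> (1 / c + C / c\<^sup>2) * D"
proof -
  have Fx_pos: "0 < Fx" using c Sy le Fx by (smt (verit) mult_pos_pos)
  have Fy_pos: "0 < Fy" using c Sy Fy by (smt (verit) mult_pos_pos)
  have D: "0 \<le> D" using dS by linarith
  have SyFx: "c * Sy \<le> Fx" using mult_left_mono[OF le, of c] c Fx by linarith
  have "Sx / Fx - Sy / Fy = ((Sx - Sy) * Fy + Sy * (Fy - Fx)) / (Fx * Fy)"
    using Fx_pos Fy_pos by (simp add: field_simps)
  moreover have "\<bar>(Sx - Sy) * Fy + Sy * (Fy - Fx)\<bar> \<le> D * Fy + Sy * (C * D)"
  proof -
    have "\<bar>(Sx - Sy) * Fy\<bar> \<le> D * Fy" using dS Fy_pos by (simp add: abs_mult mult_right_mono)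
    moreover have "\<bar>Sy * (Fy - Fx)\<bar> \<le> Sy * (C * D)"
      using dF Sy by (simp add: abs_mult abs_minus_commute mult_left_mono)
    ultimately show ?thesis by (smt (verit))
  qed
  ultimately have "Sy * \<bar>Sx / Fx - Sy / Fy\<bar> \<le> Sy * (D * Fy + Sy * (C * D)) / (Fx * Fy)"
    using Fx_pos Fy_pos Sy by (simp add: abs_mult divide_right_mono mult_left_mono)
  also have "\<dots> = D * (Sy / Fx) + C * D * (Sy * Sy / (Fx * Fy))"
    using Fx_pos Fy_pos by (simp add: field_simps)
  also have "\<dots> \<le> D * (1 / c) + C * D * (1 / c\<^sup>2)"
  proof (intro add_mono mult_left_mono)
    show "Sy / Fx \<le> 1 / c" using Fx_pos c SyFx by (simp add: field_simps)
    have "Sy * Sy \<le> (Fx / c) * (Fy / c)"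
      using SyFx Fy c Sy Fx_pos by (intro mult_mono) (simp_all add: field_simps)
    then show "Sy * Sy / (Fx * Fy) \<le> 1 / c\<^sup>2"
      using Fx_pos Fy_pos c by (simp add: field_simps power2_eq_square)
  qed (use C D in auto)
  finally show ?thesis by (simp add: algebra_simps)
qed

text \<open>Approximate s from the right by the grid points \<lceil>(n+1)s\<rceil>/(n+1).\<close>

lemma right_continuous_imp_borel_measurable:
  fixes g :: "real \<Rightarrow> real"
  assumes rc: "\<And>t. continuous (at_right t) g"
  shows "g \<in> borel_measurable borel"
proof (rule borel_measurable_LIMSEQ_real)
  define y where "y n s = real_of_int \<lceil>real (Suc n) * s\<rceil> / real (Suc n)" for n s
  show "(\<lambda>s. g (y n s)) \<in> borel_measurable borel" for n
  proof -
    have "(\<lambda>s. real (Suc n) * s) \<in> borel_measurable borel" by measurable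
    then have ceil: "(\<lambda>s. \<lceil>real (Suc n) * s\<rceil>) \<in> measurable borel (count_space UNIV)"
      by (rule measurable_compose[OF _ measurable_real_ceiling])
    have const: "(\<lambda>s. g (real_of_int k / real (Suc n))) \<in> borel_measurable borel" for k
      by (rule measurable_const) simp
    show ?thesis unfolding y_def by (rule measurable_compose_countable[OF const ceil])
  qed
  fix s :: real
  have above: "s \<le> y n s" for n
    using le_of_int_ceiling[of "real (Suc n) * s"] unfolding y_def by (simp add: field_simps)
  have close: "y n s \<le> s + 1 / real (Suc n)" for n
  proof -
    have "real_of_int \<lceil>real (Suc n) * s\<rceil> \<le> real (Suc n) * s + 1" by linarith
    then have "y n s \<le> (real (Suc n) * s + 1) / real (Suc n)"
      unfolding y_def by (intro divide_right_mono) auto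
    then show ?thesis by (simp add: field_simps)
  qed
  have upper: "(\<lambda>n. s + 1 / real (Suc n)) \<longlonglongrightarrow> s"
    using tendsto_add[OF tendsto_const LIMSEQ_inverse_real_of_nat, of s]
    by (simp add: inverse_eq_divide)
  have "(\<lambda>n. y n s) \<longlonglongrightarrow> s"
    by (rule tendsto_sandwich[OF always_eventually always_eventually tendsto_const upper])
       (use above close in auto)
  moreover have "continuous (at s within {s..}) g"
    using rc[of s] by (simp add: at_within_Ici_at_right)
  ultimately show "(\<lambda>n. g (y n s)) \<longlonglongrightarrow> g s"
    unfolding continuous_within_sequentially using above by (simp add: o_def)
qed

lemma has_integral_power_Icc:
  assumes "0 \<le> t"
  shows "((\<lambda>s::real. s ^ n) has_integral t ^ Suc n / real (Suc n)) {0..t}"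
proof -
  have "((\<lambda>s::real. s ^ n) has_integral (t ^ Suc n / real (Suc n) - 0 ^ Suc n / real (Suc n))) {0..t}"
  proof (rule fundamental_theorem_of_calculus[OF assms])
    fix x :: real
    have "((\<lambda>s. s ^ Suc n / real (Suc n)) has_real_derivative
        (real (Suc n) * x ^ n / real (Suc n))) (at x within {0..t})"
      by (intro derivative_eq_intros) auto
    then show "((\<lambda>s. s ^ Suc n / real (Suc n)) has_vector_derivative x ^ n) (at x within {0..t})"
      by (simp add: has_real_derivative_iff_has_vector_derivative)
  qed
  then show ?thesis by simp
qed

lemma iterated_integral_inequality:
  fixes a :: "nat \<Rightarrow> real \<Rightarrow> real"
  assumes L: "0 \<le> L" and K: "0 \<le> K"
    and a0: "\<And>t. t \<in> {0..T} \<Longrightarrow> a 0 t \<le> K"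
    and aSuc: "\<And>n t. t \<in> {0..T} \<Longrightarrow> a (Suc n) t \<le> L * integral {0..t} (a n)"
    and cont: "\<And>n. continuous_on {0..T} (a n)"
  shows "t \<in> {0..T} \<Longrightarrow> a n t \<le> K * (L * t) ^ n / fact n"
proof (induction n arbitrary: t)
  case 0
  then show ?case using a0 by simp
next
  case (Suc n)
  then have t: "0 \<le> t" "t \<le> T" by auto
  have "integral {0..t} (a n) \<le> K * L ^ n / fact n * (t ^ Suc n / real (Suc n))"
  proof (rule has_integral_le[OF integrable_integral])
    show "a n integrable_on {0..t}"
      by (rule integrable_continuous_real, rule continuous_on_subset[OF cont]) (use t in auto)
    show "((\<lambda>s. K * L ^ n / fact n * s ^ n) has_integral
        K * L ^ n / fact n * (t ^ Suc n / real (Suc n))) {0..t}"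
      by (intro has_integral_mult_right has_integral_power_Icc t)
    show "a n s \<le> K * L ^ n / fact n * s ^ n" if "s \<in> {0..t}" for s
      using Suc.IH[of s] that t by (simp add: power_mult_distrib)
  qed
  then have "a (Suc n) t \<le> L * (K * L ^ n / fact n * (t ^ Suc n / real (Suc n)))"
    using aSuc[OF Suc.prems] L by (smt (verit) mult_left_mono)
  also have "\<dots> = K * (L * t) ^ Suc n / fact (Suc n)"
    by (simp add: power_mult_distrib field_simps)
  finally show ?case .
qed

lemma partial_sums_abs_integral_le:
  fixes g :: "nat \<Rightarrow> nat \<Rightarrow> real \<Rightarrow> real"
  assumes g: "\<And>i j. i \<le> M \<Longrightarrow> (g i j has_integral G i j) {a..b}"
    and h: "h integrable_on {a..b}"
    and le: "\<And>s J. s \<in> {a..b} \<Longrightarrow> (\<Sum>i\<le>M. \<Sum>j<J. \<bar>g i j s\<bar>) \<le> h s"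
  shows "(\<Sum>i\<le>M. \<Sum>j<J. \<bar>G i j\<bar>) \<le> integral {a..b} h"
proof -
  have "((\<lambda>s. \<Sum>i\<le>M. \<Sum>j<J. sgn (G i j) * g i j s) has_integral
      (\<Sum>i\<le>M. \<Sum>j<J. sgn (G i j) * G i j)) {a..b}"
    by (intro has_integral_sum has_integral_mult_right g) auto
  moreover have "(\<Sum>i\<le>M. \<Sum>j<J. sgn (G i j) * g i j s) \<le> h s" if "s \<in> {a..b}" for s
  proof -
    have "sgn (G i j) * g i j s \<le> \<bar>g i j s\<bar>" for i j
      by (auto simp: sgn_real_def)
    then have "(\<Sum>i\<le>M. \<Sum>j<J. sgn (G i j) * g i j s) \<le> (\<Sum>i\<le>M. \<Sum>j<J. \<bar>g i j s\<bar>)"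
      by (intro sum_mono) auto
    with le[OF that, of J] show ?thesis by linarith
  qed
  ultimately have "(\<Sum>i\<le>M. \<Sum>j<J. sgn (G i j) * G i j) \<le> integral {a..b} h"
    by (rule has_integral_le[OF _ integrable_integral[OF h]])
  then show ?thesis by (simp add: sgn_mult_self_eq abs_sgn mult.commute)
qed

lemma suminf_eq_infsum:
  fixes f :: "nat \<Rightarrow> real"
  shows "f summable_on UNIV \<Longrightarrow> suminf f = infsum f UNIV"
  by (metis has_sum_imp_sums has_sum_infsum sums_unique)

lemma suminf_commute:
  fixes g :: "nat \<Rightarrow> nat \<Rightarrow> real"
  assumes rows: "\<And>k. summable (\<lambda>j. \<bar>g k j\<bar>)" and total: "summable (\<lambda>k. \<Sum>j. \<bar>g k j\<bar>)"
  shows "(\<Sum>j. \<Sum>k. g k j) = (\<Sum>k. \<Sum>j. g k j)"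
proof -
  have row_sum: "infsum (\<lambda>j. \<bar>g k j\<bar>) UNIV = (\<Sum>j. \<bar>g k j\<bar>)" for k
    using suminf_eq_infsum[OF norm_summable_imp_summable_on, of "\<lambda>j. \<bar>g k j\<bar>"] rows by simp
  have "(\<lambda>z. norm ((\<lambda>p. g (fst p) (snd p)) z)) summable_on Sigma UNIV (\<lambda>_. UNIV)"
  proof (rule Infinite_Sum.abs_summable_on_Sigma_iff[where f = "\<lambda>p. g (fst p) (snd p)" and A = UNIV
        and B = "\<lambda>_. UNIV", THEN iffD2], intro conjI ballI)
    show "(\<lambda>z. norm ((\<lambda>j. g (fst (k, j)) (snd (k, j))) z)) summable_on UNIV" for k
      using norm_summable_imp_summable_on[of "\<lambda>j. \<bar>g k j\<bar>"] rows by simp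
    show "(\<lambda>z. norm ((\<lambda>k. \<Sum>\<^sub>\<infinity>j\<in>UNIV. norm (g (fst (k, j)) (snd (k, j)))) z)) summable_on UNIV"
      using norm_summable_imp_summable_on[of "\<lambda>k. \<bar>\<Sum>j. \<bar>g k j\<bar>\<bar>"] total rows
      by (simp add: row_sum suminf_nonneg)
  qed
  then have abs: "(\<lambda>z. norm (case z of (k, j) \<Rightarrow> g k j)) summable_on (UNIV \<times> UNIV)"
    by (rule summable_on_cong[THEN iffD1, rotated]) (auto split: prod.splits)
  have abs_swapped: "(\<lambda>z. norm (case z of (j, k) \<Rightarrow> g k j)) summable_on (UNIV \<times> UNIV)"
  proof -
    have "(\<lambda>p. norm (case p of (k, j) \<Rightarrow> g k j)) \<circ> prod.swap summable_on (UNIV \<times> UNIV)"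
      using abs summable_on_reindex[of prod.swap "UNIV \<times> UNIV" "\<lambda>p. norm (case p of (k, j) \<Rightarrow> g k j)"]
      by (simp add: product_swap)
    then show ?thesis by (simp add: o_def case_prod_beta')
  qed
  then have cols: "(\<lambda>k. g k j) summable_on UNIV" for j
    using Infinite_Sum.abs_summable_on_Sigma_iff[where f = "\<lambda>(j, k). g k j" and A = UNIV and B = "\<lambda>_. UNIV"]
    by (auto intro: Infinite_Sum.abs_summable_summable)
  have prod: "(\<lambda>(k, j). g k j) summable_on (UNIV \<times> UNIV)"
    using abs by (rule Infinite_Sum.abs_summable_summable)
  have prod_swapped: "(\<lambda>(j, k). g k j) summable_on (UNIV \<times> UNIV)"
    using abs_swapped by (rule Infinite_Sum.abs_summable_summable)
  have "(\<Sum>j. \<Sum>k. g k j) = infsum (\<lambda>j. infsum (\<lambda>k. g k j) UNIV) UNIV"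
    using summable_on_Sigma_banach[OF prod_swapped] cols by (simp add: suminf_eq_infsum)
  also have "\<dots> = infsum (\<lambda>k. infsum (\<lambda>j. g k j) UNIV) UNIV"
    by (rule infsum_swap_banach[OF prod, symmetric])
  also have "\<dots> = (\<Sum>k. \<Sum>j. g k j)"
    using summable_on_Sigma_banach[OF prod] rows
    by (simp add: suminf_eq_infsum norm_summable_imp_summable_on)
  finally show ?thesis .
qed

lemma nonneg_if_nondecreasing_where_negative:
  fixes g h :: "real \<Rightarrow> real"
  assumes T: "0 \<le> T" and cont: "continuous_on {0..T} g" and start: "0 \<le> g 0"
    and int: "\<And>a b. 0 \<le> a \<Longrightarrow> a \<le> b \<Longrightarrow> b \<le> T \<Longrightarrow> (h has_integral (g b - g a)) {a..b}"
    and h_nonneg: "\<And>s. s \<in> {0..T} \<Longrightarrow> g s < 0 \<Longrightarrow> 0 \<le> h s"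
  shows "0 \<le> g T"
proof (rule ccontr)
  assume neg: "\<not> 0 \<le> g T"
  define S where "S = {0..T} \<inter> g -` {0..}"
  have "closed S" unfolding S_def by (rule continuous_closed_preimage[OF cont]) auto
  moreover have "0 \<in> S" and bdd: "bdd_above S" using T start unfolding S_def by auto
  ultimately have "Sup S \<in> S" by (intro closed_contains_Sup) auto
  then have t0: "0 \<le> Sup S" "Sup S \<le> T" "0 \<le> g (Sup S)" unfolding S_def by auto
  have after: "g s < 0" if "s \<in> {Sup S..T}" "s \<noteq> Sup S" for s
  proof (rule ccontr)
    assume "\<not> g s < 0"
    then have "s \<in> S" unfolding S_def using that t0 by auto
    then show False using cSup_upper[OF _ bdd] that by fastforce
  qed
  let ?h = "\<lambda>s. if s = Sup S then 0 else h s"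
  have "(?h has_integral (g T - g (Sup S))) {Sup S..T}"
    using has_integral_spike_finite_eq[of "{Sup S}" "{Sup S..T}" h ?h] int[OF t0(1,2) order_refl]
    by simp
  moreover have "0 \<le> ?h s" if "s \<in> {Sup S..T}" for s
    using h_nonneg after[OF that] that t0 by auto
  ultimately have "0 \<le> g T - g (Sup S)" by (rule has_integral_nonneg)
  then show False using t0(3) neg by linarith
qed

section \<open>Lipschitz estimates for the right-hand side\<close>

locale psi_coefficients =
  fixes M :: nat and lam :: "real \<Rightarrow> nat \<Rightarrow> real" and f :: "real \<Rightarrow> real"
    and mu :: "nat \<Rightarrow> nat \<Rightarrow> nat \<Rightarrow> real" and fl fu Bm :: real
  assumes M_pos: "1 \<le> M"
    and lam_nonneg: "\<And>t x. 0 \<le> t \<Longrightarrow> x \<le> M \<Longrightarrow> 0 \<le> lam t x"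
    and lam_right_continuous: "\<And>t x. 0 \<le> t \<Longrightarrow> x \<le> M \<Longrightarrow> continuous (at_right t) (\<lambda>t. lam t x)"
    and lam_bdd: "\<And>T. 0 < T \<Longrightarrow> \<exists>B. \<forall>t\<in>{0..T}. \<forall>x\<le>M. \<bar>lam t x\<bar> \<le> B"
    and fl_pos: "0 < fl" and f_lower: "\<And>r. fl \<le> f r" and f_upper: "\<And>r. f r \<le> fu"
    and mu_offdiag: "\<And>k i j. k \<le> M \<Longrightarrow> i \<noteq> j \<Longrightarrow> 0 \<le> mu k i j"
    and mu_diag: "\<And>k i. k \<le> M \<Longrightarrow> mu k i i \<le> 0"
    and mu_row_summable: "\<And>k i. k \<le> M \<Longrightarrow> summable (\<lambda>j. mu k i j)"
    and mu_row_sum: "\<And>k i. k \<le> M \<Longrightarrow> (\<Sum>j. mu k i j) = 0"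
    and mu_diag_bdd: "\<And>k i. k \<le> M \<Longrightarrow> \<bar>mu k i i\<bar> \<le> Bm"
begin

abbreviation rhs :: "real \<Rightarrow> family \<Rightarrow> family" where
  "rhs t x \<equiv> Psi M lam f mu t (pos_part x)"

lemma fu_pos: "0 < fu"
  using fl_pos f_lower[of 0] f_upper[of 0] by linarith

lemma Bm_nonneg: "0 \<le> Bm"
  using mu_diag_bdd[of 0 0] by linarith

lemma abs_f_le: "\<bar>f r\<bar> \<le> fu" and f_pos: "0 < f r"
  using f_lower[of r] f_upper[of r] fl_pos by auto

definition mu_term :: "family \<Rightarrow> family" where
  "mu_term x = (\<lambda>i j. \<Sum>k. mu i k j * x i k)"

lemma sums_abs_mu_row:
  assumes "i \<le> M"
  shows "(\<lambda>j. \<bar>mu i k j\<bar>) sums (- 2 * mu i k k)"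
proof -
  have "\<bar>mu i k j\<bar> = mu i k j + (if j = k then - 2 * mu i k k else 0)" for j
    using mu_offdiag[OF assms] mu_diag[OF assms] by (cases "j = k") auto
  moreover have "(\<lambda>j. mu i k j + (if j = k then - 2 * mu i k k else 0)) sums (0 + - 2 * mu i k k)"
    using sums_add[OF summable_sums[OF mu_row_summable[OF assms]] sums_single[of k "\<lambda>_. - 2 * mu i k k"]]
    by (simp add: mu_row_sum[OF assms])
  ultimately show ?thesis by simp
qed

lemma summable_abs_mu_row: "i \<le> M \<Longrightarrow> summable (\<lambda>j. \<bar>mu i k j\<bar>)"
  using sums_abs_mu_row sums_summable by blast

lemma suminf_abs_mu_row_le:
  assumes "i \<le> M"
  shows "(\<Sum>j. \<bar>mu i k j\<bar>) \<le> 2 * Bm"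
  using sums_unique[OF sums_abs_mu_row[of i k, OF assms]] mu_diag_bdd[OF assms, of k] by linarith

lemma abs_mu_le: "i \<le> M \<Longrightarrow> \<bar>mu i k j\<bar> \<le> 2 * Bm"
  using sum_le_suminf[OF summable_abs_mu_row, of i "{j}" k] suminf_abs_mu_row_le[of i k] by simp

lemma
  assumes "i \<le> M" "summable (\<lambda>k. \<bar>d k\<bar>)"
  shows summable_abs_mu_column_mult: "summable (\<lambda>k. \<bar>mu i k j\<bar> * \<bar>d k\<bar>)"
    and summable_mu_column_mult: "summable (\<lambda>k. mu i k j * d k)"
proof -
  show *: "summable (\<lambda>k. \<bar>mu i k j\<bar> * \<bar>d k\<bar>)"
    by (rule summable_comparison_test'[OF summable_mult[OF assms(2), of "2 * Bm"]])
       (use abs_mu_le[OF assms(1)] in \<open>auto intro: mult_right_mono\<close>)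
  show "summable (\<lambda>k. mu i k j * d k)"
    by (rule summable_rabs_cancel) (use * in \<open>simp add: abs_mult\<close>)
qed

lemma partial_sums_abs_mu_mult_le:
  assumes i: "i \<le> M" and d: "summable (\<lambda>k. \<bar>d k\<bar>)"
  shows "(\<Sum>j<J. \<bar>\<Sum>k. mu i k j * d k\<bar>) \<le> 2 * Bm * (\<Sum>k. \<bar>d k\<bar>)"
proof -
  have "\<bar>\<Sum>k. mu i k j * d k\<bar> \<le> (\<Sum>k. \<bar>mu i k j\<bar> * \<bar>d k\<bar>)" for j
    using summable_rabs[of "\<lambda>k. mu i k j * d k"] summable_abs_mu_column_mult[OF i d, of j]
    by (simp add: abs_mult)
  then have "(\<Sum>j<J. \<bar>\<Sum>k. mu i k j * d k\<bar>) \<le> (\<Sum>j<J. \<Sum>k. \<bar>mu i k j\<bar> * \<bar>d k\<bar>)"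
    by (rule sum_mono)
  also have "\<dots> = (\<Sum>k. \<Sum>j<J. \<bar>mu i k j\<bar> * \<bar>d k\<bar>)"
    by (rule suminf_sum[symmetric]) (rule summable_abs_mu_column_mult[OF i d])
  also have "\<dots> \<le> (\<Sum>k. 2 * Bm * \<bar>d k\<bar>)"
  proof (rule suminf_le)
    have "(\<Sum>j<J. \<bar>mu i k j\<bar>) \<le> 2 * Bm" for k
      using sum_le_suminf[OF summable_abs_mu_row[OF i], of "{..<J}" k] suminf_abs_mu_row_le[OF i, of k]
      by simp
    then show "(\<Sum>j<J. \<bar>mu i k j\<bar> * \<bar>d k\<bar>) \<le> 2 * Bm * \<bar>d k\<bar>" for k
      by (simp add: mult_right_mono flip: sum_distrib_right)
  qed (auto intro: summable_sum summable_abs_mu_column_mult[OF i d] summable_mult d)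
  also have "\<dots> = 2 * Bm * (\<Sum>k. \<bar>d k\<bar>)" by (rule suminf_mult[OF d])
  finally show ?thesis .
qed

lemma partial_sums_mu_term_diff_le:
  assumes i: "i \<le> M" and x: "summable (\<lambda>k. \<bar>x i k\<bar>)" and y: "summable (\<lambda>k. \<bar>y i k\<bar>)"
  shows "(\<Sum>j<J. \<bar>mu_term x i j - mu_term y i j\<bar>) \<le> 2 * Bm * (\<Sum>k. \<bar>x i k - y i k\<bar>)"
proof -
  have "mu_term x i j - mu_term y i j = (\<Sum>k. mu i k j * (x i k - y i k))" for j
    unfolding mu_term_def
    using suminf_diff[OF summable_mu_column_mult[OF i x] summable_mu_column_mult[OF i y]]
    by (simp add: right_diff_distrib)
  then show ?thesis
    using partial_sums_abs_mu_mult_le[OF i summable_abs_row_diff[of x i y, OF x y]] by simp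
qed

definition mass :: "(nat \<Rightarrow> real) \<Rightarrow> real" where
  "mass x = (\<Sum>l. x l)"

definition weighted_mass :: "(nat \<Rightarrow> real) \<Rightarrow> real" where
  "weighted_mass x = (\<Sum>l. f (real l) * x l)"

text \<open>inv_phi x = 1 / phi for the row x; on a zero row the division gives 0, which matches
  the convention built into ratio.\<close>

definition inv_phi :: "(nat \<Rightarrow> real) \<Rightarrow> real" where
  "inv_phi x = mass x / weighted_mass x"

lemma ratio_eq_inv_phi: "ratio f x i j = x i j * inv_phi (x i)"
  unfolding ratio_def phi_def inv_phi_def mass_def weighted_mass_def
  by (cases "\<forall>l. x i l = 0") (simp_all add: divide_divide_eq_right mult.commute)

lemma summable_weighted:
  assumes "summable (\<lambda>l. \<bar>x l\<bar>)"
  shows "summable (\<lambda>l. f (real l) * x l)"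
  by (rule summable_rabs_cancel, rule summable_comparison_test'[OF summable_mult[OF assms, of fu]])
     (simp add: abs_mult mult_right_mono abs_f_le)

lemma
  assumes "summable x" "\<And>l. 0 \<le> x l"
  shows mass_nonneg: "0 \<le> mass x"
    and weighted_mass_lower: "fl * mass x \<le> weighted_mass x"
proof -
  have sf: "summable (\<lambda>l. f (real l) * x l)" by (rule summable_weighted) (use assms in simp)
  show "0 \<le> mass x" unfolding mass_def using assms by (intro suminf_nonneg)
  have "fl * mass x = (\<Sum>l. fl * x l)" unfolding mass_def by (rule suminf_mult[OF assms(1), symmetric])
  also have "\<dots> \<le> weighted_mass x" unfolding weighted_mass_def
    by (rule suminf_le) (auto intro: mult_right_mono f_lower assms summable_mult sf)
  finally show "fl * mass x \<le> weighted_mass x" .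
qed

lemma
  assumes "summable x" "\<And>l. 0 \<le> x l"
  shows inv_phi_nonneg: "0 \<le> inv_phi x"
    and inv_phi_le: "inv_phi x \<le> 1 / fl"
proof -
  note bounds = mass_nonneg[OF assms] weighted_mass_lower[OF assms]
  have "0 \<le> weighted_mass x" using bounds fl_pos by (meson mult_nonneg_nonneg less_imp_le order_trans)
  then show "0 \<le> inv_phi x" unfolding inv_phi_def using bounds by simp
  show "inv_phi x \<le> 1 / fl"
  proof (cases "mass x = 0")
    case False
    then have "0 < mass x" using bounds by simp
    then have "0 < weighted_mass x" using bounds fl_pos by (meson mult_pos_pos order_less_le_trans)
    then show ?thesis unfolding inv_phi_def using bounds fl_pos by (simp add: field_simps)
  qed (use fl_pos in \<open>simp add: inv_phi_def\<close>)
qed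

lemma abs_mass_diff_le:
  assumes "summable x" "summable y" "summable (\<lambda>k. \<bar>x k - y k\<bar>)"
  shows "\<bar>mass x - mass y\<bar> \<le> (\<Sum>k. \<bar>x k - y k\<bar>)"
  unfolding mass_def suminf_diff[OF assms(1,2)] by (rule summable_rabs[OF assms(3)])

lemma abs_weighted_mass_diff_le:
  assumes x: "summable (\<lambda>k. \<bar>x k\<bar>)" and y: "summable (\<lambda>k. \<bar>y k\<bar>)"
    and d: "summable (\<lambda>k. \<bar>x k - y k\<bar>)"
  shows "\<bar>weighted_mass x - weighted_mass y\<bar> \<le> fu * (\<Sum>k. \<bar>x k - y k\<bar>)"
proof -
  have le: "\<bar>f (real k) * (x k - y k)\<bar> \<le> fu * \<bar>x k - y k\<bar>" for k
    by (simp add: abs_mult mult_right_mono abs_f_le)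
  have summable: "summable (\<lambda>k. \<bar>f (real k) * (x k - y k)\<bar>)"
    by (rule summable_comparison_test'[OF summable_mult[OF d]]) (use le in simp)
  have "weighted_mass x - weighted_mass y = (\<Sum>k. f (real k) * (x k - y k))"
    unfolding weighted_mass_def
    using suminf_diff[OF summable_weighted[OF x] summable_weighted[OF y]]
    by (simp add: right_diff_distrib)
  also have "\<bar>\<dots>\<bar> \<le> (\<Sum>k. \<bar>f (real k) * (x k - y k)\<bar>)" by (rule summable_rabs[OF summable])
  also have "\<dots> \<le> (\<Sum>k. fu * \<bar>x k - y k\<bar>)" by (rule suminf_le[OF le summable summable_mult[OF d]])
  also have "\<dots> = fu * (\<Sum>k. \<bar>x k - y k\<bar>)" by (rule suminf_mult[OF d])
  finally show ?thesis .
qed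

definition row_lip :: real where
  "row_lip = 2 / fl + fu / fl\<^sup>2"

lemma row_lip_pos: "0 < row_lip"
  unfolding row_lip_def using fl_pos fu_pos by (intro add_pos_pos divide_pos_pos) auto

lemma partial_sums_scaled_row_diff_le_if_mass_le:
  assumes x: "summable x" "\<And>l. 0 \<le> x l" and y: "summable y" "\<And>l. 0 \<le> y l"
    and le: "mass y \<le> mass x"
  shows "(\<Sum>j<J. \<bar>x j * inv_phi x - y j * inv_phi y\<bar>) \<le> row_lip * (\<Sum>k. \<bar>x k - y k\<bar>)"
proof -
  have xa: "summable (\<lambda>l. \<bar>x l\<bar>)" and ya: "summable (\<lambda>l. \<bar>y l\<bar>)" using x y by auto
  have d: "summable (\<lambda>k. \<bar>x k - y k\<bar>)"
    by (rule summable_comparison_test'[OF summable_add[OF xa ya]]) auto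
  define D where "D = (\<Sum>k. \<bar>x k - y k\<bar>)"
  have D: "0 \<le> D" unfolding D_def using d by (intro suminf_nonneg) auto
  have "(\<Sum>j<J. \<bar>x j * inv_phi x - y j * inv_phi y\<bar>)
      \<le> (\<Sum>j<J. inv_phi x * \<bar>x j - y j\<bar> + y j * \<bar>inv_phi x - inv_phi y\<bar>)"
  proof (rule sum_mono)
    fix j
    have "x j * inv_phi x - y j * inv_phi y = inv_phi x * (x j - y j) + y j * (inv_phi x - inv_phi y)"
      by (simp add: algebra_simps)
    also have "\<bar>\<dots>\<bar> \<le> \<bar>inv_phi x * (x j - y j)\<bar> + \<bar>y j * (inv_phi x - inv_phi y)\<bar>"
      by (rule abs_triangle_ineq)
    also have "\<dots> = inv_phi x * \<bar>x j - y j\<bar> + y j * \<bar>inv_phi x - inv_phi y\<bar>"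
      using inv_phi_nonneg[OF x] y(2)[of j] by (simp add: abs_mult)
    finally show "\<bar>x j * inv_phi x - y j * inv_phi y\<bar> \<le> \<dots>" .
  qed
  also have "\<dots> = inv_phi x * (\<Sum>j<J. \<bar>x j - y j\<bar>) + (\<Sum>j<J. y j) * \<bar>inv_phi x - inv_phi y\<bar>"
    by (simp add: sum.distrib sum_distrib_left sum_distrib_right)
  also have "\<dots> \<le> (1 / fl) * D + mass y * \<bar>inv_phi x - inv_phi y\<bar>"
  proof (intro add_mono mult_mono mult_right_mono)
    show "(\<Sum>j<J. \<bar>x j - y j\<bar>) \<le> D" unfolding D_def using d by (intro sum_le_suminf) auto
    show "(\<Sum>j<J. y j) \<le> mass y" unfolding mass_def using y by (intro sum_le_suminf) auto
  qed (use inv_phi_le[OF x] mass_nonneg[OF y] fl_pos D in \<open>auto intro: sum_nonneg\<close>)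
  also have "mass y * \<bar>inv_phi x - inv_phi y\<bar> \<le> (1 / fl + fu / fl\<^sup>2) * D"
  proof (cases "mass y = 0")
    case False
    then have "0 < mass y" using mass_nonneg[OF y] by simp
    then show ?thesis unfolding inv_phi_def
      using abs_quotient_diff_le[OF fl_pos _ le weighted_mass_lower[OF x] weighted_mass_lower[OF y]
          abs_mass_diff_le[OF x(1) y(1) d] abs_weighted_mass_diff_le[OF xa ya d]] fu_pos
      by (simp add: D_def)
  qed (use D fl_pos fu_pos in simp)
  finally show ?thesis unfolding row_lip_def D_def by (simp add: algebra_simps)
qed

lemma partial_sums_scaled_row_diff_le:
  assumes "summable x" "\<And>l. 0 \<le> x l" "summable y" "\<And>l. 0 \<le> y l"
  shows "(\<Sum>j<J. \<bar>x j * inv_phi x - y j * inv_phi y\<bar>) \<le> row_lip * (\<Sum>k. \<bar>x k - y k\<bar>)"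
proof (cases "mass y \<le> mass x")
  case False
  then show ?thesis
    using partial_sums_scaled_row_diff_le_if_mass_le[OF assms(3,4,1,2)] by (simp add: abs_minus_commute)
qed (rule partial_sums_scaled_row_diff_le_if_mass_le[OF assms])

end

lemma
  fixes x :: family
  assumes "summable (\<lambda>k. \<bar>x i k\<bar>)"
  shows summable_abs_pos_part_row: "summable (\<lambda>k. \<bar>pos_part x i k\<bar>)"
    and summable_pos_part_row: "summable (\<lambda>k. pos_part x i k)"
proof -
  show *: "summable (\<lambda>k. \<bar>pos_part x i k\<bar>)"
    by (rule summable_comparison_test'[OF assms]) (auto simp: pos_part_def)
  show "summable (\<lambda>k. pos_part x i k)" by (rule summable_rabs_cancel[OF *])
qed

lemma pos_part_nonneg: "0 \<le> pos_part x i k"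
  unfolding pos_part_def by simp

lemma abs_pos_part_diff_le: "\<bar>pos_part x i k - pos_part y i k\<bar> \<le> \<bar>x i k - y i k\<bar>"
  unfolding pos_part_def by auto

lemma suminf_abs_pos_part_diff_le:
  fixes x y :: family
  assumes x: "summable (\<lambda>k. \<bar>x i k\<bar>)" and y: "summable (\<lambda>k. \<bar>y i k\<bar>)"
  shows "(\<Sum>k. \<bar>pos_part x i k - pos_part y i k\<bar>) \<le> (\<Sum>k. \<bar>x i k - y i k\<bar>)"
  by (rule suminf_le[OF abs_pos_part_diff_le
        summable_abs_row_diff[of "pos_part x" i "pos_part y",
          OF summable_abs_pos_part_row[of x i, OF x] summable_abs_pos_part_row[of y i, OF y]]
        summable_abs_row_diff[of x i y, OF x y]])

context psi_coefficients
begin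

definition transfer_term :: "family \<Rightarrow> family" where
  "transfer_term x = (\<lambda>i j. f (real j) * (x i j * inv_phi (x i)))"

lemma Psi_eq:
  "Psi M lam f mu t x i j = mu_term x i j
      + (if 1 \<le> i then lam t (i - 1) * transfer_term x (i - 1) j else 0)
      - (if i \<le> M - 1 then lam t i * transfer_term x i j else 0)"
  unfolding Psi_def mu_term_def transfer_term_def ratio_eq_inv_phi by (simp add: mult.assoc)

lemma partial_sums_transfer_term_diff_le:
  fixes x y :: family
  assumes x: "summable (\<lambda>k. \<bar>x i k\<bar>)" and y: "summable (\<lambda>k. \<bar>y i k\<bar>)"
  shows "(\<Sum>j<J. \<bar>transfer_term (pos_part x) i j - transfer_term (pos_part y) i j\<bar>)
    \<le> fu * row_lip * (\<Sum>k. \<bar>x i k - y i k\<bar>)"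
proof -
  let ?X = "pos_part x i" and ?Y = "pos_part y i"
  have "(\<Sum>j<J. \<bar>transfer_term (pos_part x) i j - transfer_term (pos_part y) i j\<bar>)
      \<le> (\<Sum>j<J. fu * \<bar>?X j * inv_phi ?X - ?Y j * inv_phi ?Y\<bar>)"
    unfolding transfer_term_def
    by (intro sum_mono) (simp add: abs_mult mult_right_mono abs_f_le flip: right_diff_distrib)
  also have "\<dots> = fu * (\<Sum>j<J. \<bar>?X j * inv_phi ?X - ?Y j * inv_phi ?Y\<bar>)"
    by (simp add: sum_distrib_left)
  also have "\<dots> \<le> fu * (row_lip * (\<Sum>k. \<bar>?X k - ?Y k\<bar>))"
    using fu_pos
    by (intro mult_left_mono partial_sums_scaled_row_diff_le summable_pos_part_row x y pos_part_nonneg)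
       simp
  also have "\<dots> \<le> fu * (row_lip * (\<Sum>k. \<bar>x i k - y i k\<bar>))"
    using fu_pos row_lip_pos
    by (intro mult_left_mono suminf_abs_pos_part_diff_le x y) simp_all
  finally show ?thesis by (simp add: mult.assoc)
qed

lemma abs_mu_term_diff_le:
  assumes x: "summable_family M x" and y: "summable_family M y" and i: "i \<le> M"
  shows "\<bar>mu_term (pos_part x) i j - mu_term (pos_part y) i j\<bar> \<le> 2 * Bm * l1dist M x y"
proof -
  have rx: "summable (\<lambda>k. \<bar>x i k\<bar>)" and ry: "summable (\<lambda>k. \<bar>y i k\<bar>)"
    using x y i unfolding summable_family_def by auto
  have "\<bar>mu_term (pos_part x) i j - mu_term (pos_part y) i j\<bar>
      \<le> (\<Sum>j'<Suc j. \<bar>mu_term (pos_part x) i j' - mu_term (pos_part y) i j'\<bar>)"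
    by (intro member_le_sum) auto
  also have "\<dots> \<le> 2 * Bm * (\<Sum>k. \<bar>pos_part x i k - pos_part y i k\<bar>)"
    by (rule partial_sums_mu_term_diff_le[of i "pos_part x" "pos_part y", OF i summable_abs_pos_part_row[of x i, OF rx]
          summable_abs_pos_part_row[of y i, OF ry]])
  also have "\<dots> \<le> 2 * Bm * l1dist M x y"
    using suminf_abs_pos_part_diff_le[of x i y, OF rx ry] suminf_abs_row_le_l1norm[OF summable_family_diff[OF x y] i]
    by (intro mult_left_mono) (use Bm_nonneg in auto)
  finally show ?thesis .
qed

lemma abs_transfer_term_diff_le:
  assumes x: "summable_family M x" and y: "summable_family M y" and i: "i \<le> M"
  shows "\<bar>transfer_term (pos_part x) i j - transfer_term (pos_part y) i j\<bar>
    \<le> fu * row_lip * l1dist M x y"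
proof -
  have rx: "summable (\<lambda>k. \<bar>x i k\<bar>)" and ry: "summable (\<lambda>k. \<bar>y i k\<bar>)"
    using x y i unfolding summable_family_def by auto
  have "\<bar>transfer_term (pos_part x) i j - transfer_term (pos_part y) i j\<bar>
      \<le> (\<Sum>j'<Suc j. \<bar>transfer_term (pos_part x) i j' - transfer_term (pos_part y) i j'\<bar>)"
    by (intro member_le_sum) auto
  also have "\<dots> \<le> fu * row_lip * (\<Sum>k. \<bar>x i k - y i k\<bar>)"
    by (rule partial_sums_transfer_term_diff_le[of x i y, OF rx ry])
  also have "\<dots> \<le> fu * row_lip * l1dist M x y"
    using suminf_abs_row_le_l1norm[OF summable_family_diff[OF x y] i] fu_pos row_lip_pos
    by (intro mult_left_mono) simp_all
  finally show ?thesis .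
qed

lemma abs_Psi_diff_le:
  assumes i: "i \<le> M" and lam: "\<And>i. i \<le> M \<Longrightarrow> \<bar>lam t i\<bar> \<le> \<Lambda>"
  shows "\<bar>Psi M lam f mu t x i j - Psi M lam f mu t y i j\<bar>
    \<le> \<bar>mu_term x i j - mu_term y i j\<bar>
      + (if 1 \<le> i then \<Lambda> * \<bar>transfer_term x (i - 1) j - transfer_term y (i - 1) j\<bar> else 0)
      + \<Lambda> * \<bar>transfer_term x i j - transfer_term y i j\<bar>"
proof -
  have scaled: "\<bar>lam t i' * a - lam t i' * b\<bar> \<le> \<Lambda> * \<bar>a - b\<bar>" if "i' \<le> M" for i' a b
    using lam[OF that] by (simp add: abs_mult mult_right_mono flip: right_diff_distrib)
  have "0 \<le> \<Lambda>" using lam[of 0] by simp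
  then have inflow: "\<bar>(if 1 \<le> i then lam t (i - 1) * transfer_term x (i - 1) j else 0)
      - (if 1 \<le> i then lam t (i - 1) * transfer_term y (i - 1) j else 0)\<bar>
    \<le> (if 1 \<le> i then \<Lambda> * \<bar>transfer_term x (i - 1) j - transfer_term y (i - 1) j\<bar> else 0)"
    and outflow: "\<bar>(if i \<le> M - 1 then lam t i * transfer_term x i j else 0)
      - (if i \<le> M - 1 then lam t i * transfer_term y i j else 0)\<bar>
    \<le> \<Lambda> * \<bar>transfer_term x i j - transfer_term y i j\<bar>"
    using scaled[of "i - 1"] scaled[of i] i by auto
  have "\<bar>(a1 + b1 - c1) - (a2 + b2 - c2)\<bar> \<le> \<bar>a1 - a2\<bar> + \<bar>b1 - b2\<bar> + \<bar>c1 - c2\<bar>"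
    for a1 a2 b1 b2 c1 c2 :: real
    by arith
  from this[of "mu_term x i j"] inflow outflow show ?thesis unfolding Psi_eq by (smt (verit))
qed

definition rhs_lip :: "real \<Rightarrow> real" where
  "rhs_lip \<Lambda> = 2 * Bm + 2 * \<Lambda> * fu * row_lip"

lemma partial_sums_rhs_row_diff_le:
  assumes x: "summable_family M x" and y: "summable_family M y" and i: "i \<le> M"
    and lam: "\<And>i. i \<le> M \<Longrightarrow> \<bar>lam t i\<bar> \<le> \<Lambda>"
  defines "D \<equiv> \<lambda>i. \<Sum>k. \<bar>x i k - y i k\<bar>"
  shows "(\<Sum>j<J. \<bar>rhs t x i j - rhs t y i j\<bar>)
    \<le> 2 * Bm * D i + (if 1 \<le> i then \<Lambda> * fu * row_lip * D (i - 1) else 0) + \<Lambda> * fu * row_lip * D i"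
proof -
  let ?X = "pos_part x" and ?Y = "pos_part y"
  have \<Lambda>: "0 \<le> \<Lambda>" using lam[of 0] by simp
  have row: "summable (\<lambda>k. \<bar>x i' k\<bar>)" "summable (\<lambda>k. \<bar>y i' k\<bar>)" if "i' \<le> M" for i'
    using x y that unfolding summable_family_def by auto
  have transfer: "\<Lambda> * (\<Sum>j<J. \<bar>transfer_term ?X i' j - transfer_term ?Y i' j\<bar>)
      \<le> \<Lambda> * fu * row_lip * D i'" if "i' \<le> M" for i'
    using mult_left_mono[OF partial_sums_transfer_term_diff_le[of x i' y, OF row[OF that]] \<Lambda>]
    by (simp add: D_def mult.assoc)
  have "(\<Sum>j<J. \<bar>rhs t x i j - rhs t y i j\<bar>)
      \<le> (\<Sum>j<J. \<bar>mu_term ?X i j - mu_term ?Y i j\<bar>)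
        + (if 1 \<le> i then \<Lambda> * (\<Sum>j<J. \<bar>transfer_term ?X (i - 1) j - transfer_term ?Y (i - 1) j\<bar>) else 0)
        + \<Lambda> * (\<Sum>j<J. \<bar>transfer_term ?X i j - transfer_term ?Y i j\<bar>)"
    using sum_mono[OF abs_Psi_diff_le[OF i lam, of ?X _ ?Y], of "{..<J}"]
    by (cases "1 \<le> i") (simp_all add: sum.distrib sum_distrib_left)
  also have "\<dots> \<le> 2 * Bm * D i + (if 1 \<le> i then \<Lambda> * fu * row_lip * D (i - 1) else 0)
      + \<Lambda> * fu * row_lip * D i"
  proof (intro add_mono)
    have "(\<Sum>j<J. \<bar>mu_term ?X i j - mu_term ?Y i j\<bar>) \<le> 2 * Bm * (\<Sum>k. \<bar>?X i k - ?Y i k\<bar>)"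
      using row[OF i] by (intro partial_sums_mu_term_diff_le i summable_abs_pos_part_row)
    also have "\<dots> \<le> 2 * Bm * D i"
      unfolding D_def using Bm_nonneg row[OF i]
      by (intro mult_left_mono suminf_abs_pos_part_diff_le) simp_all
    finally show "(\<Sum>j<J. \<bar>mu_term ?X i j - mu_term ?Y i j\<bar>) \<le> 2 * Bm * D i" .
  qed (use transfer i in auto)
  finally show ?thesis .
qed

lemma partial_sums_rhs_diff_le:
  assumes x: "summable_family M x" and y: "summable_family M y"
    and lam: "\<And>i. i \<le> M \<Longrightarrow> \<bar>lam t i\<bar> \<le> \<Lambda>"
  shows "(\<Sum>i\<le>M. \<Sum>j<J. \<bar>rhs t x i j - rhs t y i j\<bar>) \<le> rhs_lip \<Lambda> * l1dist M x y"
proof -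
  define D where "D i = (\<Sum>k. \<bar>x i k - y i k\<bar>)" for i
  define c where "c = \<Lambda> * fu * row_lip"
  have c: "0 \<le> c" unfolding c_def using lam[of 0] fu_pos row_lip_pos by simp
  have D: "0 \<le> D i" if "i \<le> M" for i
    using x y that unfolding D_def summable_family_def
    by (intro suminf_nonneg summable_abs_row_diff) auto
  have "(\<Sum>i\<le>M. \<Sum>j<J. \<bar>rhs t x i j - rhs t y i j\<bar>)
      \<le> (\<Sum>i\<le>M. 2 * Bm * D i + (if 1 \<le> i then c * D (i - 1) else 0) + c * D i)"
  proof (rule sum_mono)
    fix i assume "i \<in> {..M}"
    then show "(\<Sum>j<J. \<bar>rhs t x i j - rhs t y i j\<bar>)
        \<le> 2 * Bm * D i + (if 1 \<le> i then c * D (i - 1) else 0) + c * D i"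
      unfolding D_def c_def by (intro partial_sums_rhs_row_diff_le[OF x y _ lam]) simp
  qed
  also have "\<dots> = 2 * Bm * (\<Sum>i\<le>M. D i) + (\<Sum>i\<le>M. if 1 \<le> i then c * D (i - 1) else 0)
      + c * (\<Sum>i\<le>M. D i)"
    by (simp add: sum.distrib sum_distrib_left)
  also have "(\<Sum>i\<le>M. if 1 \<le> i then c * D (i - 1) else 0) \<le> c * (\<Sum>i\<le>M. D i)"
  proof -
    obtain m where m: "M = Suc m" using M_pos by (cases M) auto
    have "(\<Sum>i\<le>M. if 1 \<le> i then c * D (i - 1) else 0) = (\<Sum>i\<le>m. c * D i)"
      unfolding m sum.atMost_Suc_shift by simp
    also have "\<dots> \<le> (\<Sum>i\<le>M. c * D i)"
      using D c unfolding m by (intro sum_mono2) auto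
    finally show ?thesis by (simp add: sum_distrib_left)
  qed
  also have "(\<Sum>i\<le>M. D i) = l1dist M x y" unfolding D_def l1norm_def by simp
  finally show ?thesis unfolding rhs_lip_def c_def by (simp add: algebra_simps)
qed

lemma rhs_zero: "rhs t (\<lambda>i j. 0) = (\<lambda>i j. 0)"
  unfolding Psi_def ratio_def pos_part_def by (simp add: fun_eq_iff)

lemma partial_sums_rhs_le:
  assumes "summable_family M x" "\<And>i. i \<le> M \<Longrightarrow> \<bar>lam t i\<bar> \<le> \<Lambda>"
  shows "(\<Sum>i\<le>M. \<Sum>j<J. \<bar>rhs t x i j\<bar>) \<le> rhs_lip \<Lambda> * l1norm M x"
  using partial_sums_rhs_diff_le[OF assms(1) summable_family_zero assms(2), of J]
  by (simp add: rhs_zero)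

lemma rhs_nonneg_where_nonpos:
  assumes x: "summable_family M x" and t: "0 \<le> t" and i: "i \<le> M" and nonpos: "x i j \<le> 0"
  shows "0 \<le> rhs t x i j"
proof -
  let ?X = "pos_part x"
  have zero: "?X i j = 0" using nonpos by (simp add: pos_part_def)
  have row: "summable (\<lambda>k. \<bar>x i' k\<bar>)" if "i' \<le> M" for i'
    using x that unfolding summable_family_def by auto
  have "0 \<le> mu_term ?X i j" unfolding mu_term_def
  proof (rule suminf_nonneg)
    show "summable (\<lambda>k. mu i k j * ?X i k)"
      by (rule summable_mu_column_mult[OF i summable_abs_pos_part_row[of x i, OF row[OF i]]])
    show "0 \<le> mu i k j * ?X i k" for k
      using zero mu_offdiag[OF i, of k j] pos_part_nonneg[of x i k] by (cases "k = j") auto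
  qed
  moreover have "0 \<le> transfer_term ?X i' j" if "i' \<le> M" for i'
    unfolding transfer_term_def
    using f_pos[of "real j"] pos_part_nonneg[of x i' j]
      inv_phi_nonneg[OF summable_pos_part_row[of x i', OF row[OF that]] pos_part_nonneg]
    by simp
  moreover have "transfer_term ?X i j = 0" unfolding transfer_term_def zero by simp
  ultimately show ?thesis unfolding Psi_eq using lam_nonneg[OF t, of "i - 1"] i by simp
qed

lemma sums_mu_term_row:
  assumes i: "i \<le> M" and x: "summable (\<lambda>k. \<bar>x i k\<bar>)"
  shows "(\<lambda>j. mu_term x i j) sums 0"
proof -
  have "summable (\<lambda>j. \<bar>mu_term x i j\<bar>)"
    by (rule summableI_nonneg_bounded[of _ "2 * Bm * (\<Sum>k. \<bar>x i k\<bar>)"])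
       (simp_all add: mu_term_def partial_sums_abs_mu_mult_le[OF i x])
  then have summable: "summable (\<lambda>j. mu_term x i j)" by (rule summable_rabs_cancel)
  have rows: "summable (\<lambda>j. \<bar>mu i k j * x i k\<bar>)" for k
    using summable_mult2[OF summable_abs_mu_row[OF i, of k], of "\<bar>x i k\<bar>"] by (simp add: abs_mult)
  have row_sum: "(\<Sum>j. \<bar>mu i k j * x i k\<bar>) = - 2 * mu i k k * \<bar>x i k\<bar>" for k
    using sums_mult2[OF sums_abs_mu_row[OF i, of k], of "\<bar>x i k\<bar>"] by (simp add: abs_mult sums_iff)
  have "summable (\<lambda>k. \<Sum>j. \<bar>mu i k j * x i k\<bar>)"
  proof (rule summable_comparison_test'[OF summable_mult[OF x, of "2 * Bm"]])
    fix k
    have nonneg: "0 \<le> - 2 * mu i k k" using mu_diag[OF i, of k] by simp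
    have "- 2 * mu i k k * \<bar>x i k\<bar> \<le> 2 * Bm * \<bar>x i k\<bar>"
      using mu_diag_bdd[OF i, of k] by (intro mult_right_mono) auto
    then show "norm (\<Sum>j. \<bar>mu i k j * x i k\<bar>) \<le> 2 * Bm * \<bar>x i k\<bar>"
      unfolding row_sum real_norm_def abs_of_nonneg[OF mult_nonneg_nonneg[OF nonneg abs_ge_zero]] .
  qed
  then have "(\<Sum>j. mu_term x i j) = (\<Sum>k. \<Sum>j. mu i k j * x i k)"
    unfolding mu_term_def by (rule suminf_commute[OF rows])
  also have "\<dots> = 0"
    using suminf_mult2[OF mu_row_summable[OF i]] mu_row_sum[OF i] by simp
  finally show ?thesis using summable by (simp add: sums_iff)
qed

lemma sums_transfer_term_row:
  assumes x: "summable x" "\<And>l. 0 \<le> x l"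
  shows "(\<lambda>j. f (real j) * (x j * inv_phi x)) sums mass x"
proof -
  have "(\<lambda>j. f (real j) * x j) sums weighted_mass x"
    unfolding weighted_mass_def by (rule summable_sums[OF summable_weighted]) (use x in simp)
  then have "(\<lambda>j. inv_phi x * (f (real j) * x j)) sums (inv_phi x * weighted_mass x)"
    by (rule sums_mult)
  moreover have "inv_phi x * weighted_mass x = mass x"
  proof (cases "weighted_mass x = 0")
    case True
    then have "mass x = 0"
      using weighted_mass_lower[OF x] mass_nonneg[OF x] fl_pos by (simp add: mult_le_0_iff)
    then show ?thesis using True by simp
  qed (simp add: inv_phi_def)
  ultimately show ?thesis by (simp add: algebra_simps)
qed

lemma sums_rhs_row:
  assumes x: "summable_family M x" and i: "i \<le> M"
  shows "(\<lambda>j. rhs s x i j) sums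
    ((if 1 \<le> i then lam s (i - 1) * mass (pos_part x (i - 1)) else 0)
      - (if i \<le> M - 1 then lam s i * mass (pos_part x i) else 0))"
proof -
  have row: "summable (\<lambda>k. \<bar>x i' k\<bar>)" if "i' \<le> M" for i'
    using x that unfolding summable_family_def by auto
  have transfer: "(\<lambda>j. transfer_term (pos_part x) i' j) sums mass (pos_part x i')" if "i' \<le> M" for i'
    unfolding transfer_term_def
    by (rule sums_transfer_term_row[OF summable_pos_part_row[of x i', OF row[OF that]] pos_part_nonneg])
  have inflow: "(\<lambda>j. if 1 \<le> i then lam s (i - 1) * transfer_term (pos_part x) (i - 1) j else 0) sums
      (if 1 \<le> i then lam s (i - 1) * mass (pos_part x (i - 1)) else 0)"
    using sums_mult[OF transfer[of "i - 1"]] i by auto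
  have outflow: "(\<lambda>j. if i \<le> M - 1 then lam s i * transfer_term (pos_part x) i j else 0) sums
      (if i \<le> M - 1 then lam s i * mass (pos_part x i) else 0)"
    using sums_mult[OF transfer[of i]] i by auto
  show ?thesis
    unfolding Psi_eq
    using sums_diff[OF sums_add[OF sums_mu_term_row[of i "pos_part x", OF i
          summable_abs_pos_part_row[of x i, OF row[OF i]]] inflow] outflow]
    by simp
qed

text \<open>What leaves level i < M enters level i+1, so the row sums of rhs telescope over i.\<close>

lemma partial_sums_rhs_tendsto_zero:
  assumes x: "summable_family M x"
  shows "(\<lambda>J. \<Sum>i\<le>M. \<Sum>j<J. rhs s x i j) \<longlonglongrightarrow> 0"
proof -
  define a where "a i = lam s i * mass (pos_part x i)" for i
  define c where "c i = (if 1 \<le> i then a (i - 1) else 0) - (if i \<le> M - 1 then a i else 0)" for i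
  have "(\<lambda>J. \<Sum>i\<le>M. \<Sum>j<J. rhs s x i j) \<longlonglongrightarrow> (\<Sum>i\<le>M. c i)"
    using sums_rhs_row[OF x] unfolding sums_def c_def a_def by (intro tendsto_sum) auto
  moreover have "(\<Sum>i\<le>M. c i) = 0"
  proof -
    obtain m where m: "M = Suc m" using M_pos by (cases M) auto
    have "(\<Sum>i\<le>M. if 1 \<le> i then a (i - 1) else 0) = (\<Sum>i\<le>m. a i)"
      unfolding m sum.atMost_Suc_shift by simp
    moreover have "(\<Sum>i\<le>M. if i \<le> M - 1 then a i else 0) = (\<Sum>i\<le>m. a i)"
      unfolding m sum.atMost_Suc by simp
    ultimately show ?thesis unfolding c_def sum_subtractf by simp
  qed
  ultimately show ?thesis by simp
qed

lemma lam_bounded: "\<exists>B\<ge>0. \<forall>s\<in>{0..T}. \<forall>x\<le>M. \<bar>lam s x\<bar> \<le> B"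
proof -
  have "0 < max 1 T" by simp
  then obtain B where B: "\<forall>s\<in>{0..max 1 T}. \<forall>x\<le>M. \<bar>lam s x\<bar> \<le> B"
    using lam_bdd by blast
  then have "0 \<le> B" using order_trans[OF abs_ge_zero, of "lam 0 0" B] by simp
  with B show ?thesis by (intro exI[of _ B]) auto
qed

text \<open>Measurability is proved on the whole real line, so lam is first extended to negative times
  by its value at 0.\<close>

lemma right_continuous_lam_extended:
  assumes "i \<le> M"
  shows "continuous (at_right s) (\<lambda>s. lam (max 0 s) i)"
proof (cases "s < 0")
  case True
  have "eventually (\<lambda>u. lam (max 0 u) i = lam (max 0 s) i) (at_right s)"
    using True unfolding eventually_at_right_field by (intro exI[of _ 0]) auto
  then show ?thesis unfolding continuous_within by (rule tendsto_eventually)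
next
  case False
  have "((\<lambda>t. lam t i) \<longlongrightarrow> lam s i) (at_right s)"
    using lam_right_continuous[of s i] assms False by (simp add: continuous_within)
  moreover have "eventually (\<lambda>u. lam u i = lam (max 0 u) i) (at_right s)"
    using False unfolding eventually_at_right_field by (intro exI[of _ "s + 1"]) auto
  ultimately show ?thesis
    unfolding continuous_within using False by (simp add: tendsto_cong)
qed

lemma integrable_lam_mult:
  assumes i: "i \<le> M" and c: "continuous_on {0..t} c"
  shows "(\<lambda>s. lam s i * c s) integrable_on {0..t}"
proof -
  obtain B where B: "\<forall>s\<in>{0..t}. \<forall>x\<le>M. \<bar>lam s x\<bar> \<le> B" using lam_bounded by blast
  let ?l = "\<lambda>s. lam (max 0 s) i"
  have "?l \<in> borel_measurable (lebesgue_on {0..t})"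
    using right_continuous_imp_borel_measurable[OF right_continuous_lam_extended[OF i]]
    by (intro measurable_restrict_space1 measurable_completion) simp
  moreover have "bounded (?l ` {0..t})"
    unfolding bounded_iff using B i by (intro exI[of _ B]) auto
  ultimately have "(\<lambda>s. ?l s * c s) absolutely_integrable_on {0..t}"
    by (intro absolutely_integrable_bounded_measurable_product_real
        absolutely_integrable_continuous_real c) simp_all
  then have "(\<lambda>s. ?l s * c s) integrable_on {0..t}" by (simp add: absolutely_integrable_on_def)
  then show ?thesis by (rule integrable_eq) auto
qed

definition l1_continuous :: "(real \<Rightarrow> family) \<Rightarrow> bool" where
  "l1_continuous x \<longleftrightarrow> (\<forall>t\<ge>0. ((\<lambda>s. l1dist M (x s) (x t)) \<longlongrightarrow> 0) (at t within {0..}))"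

definition admissible :: "(real \<Rightarrow> family) \<Rightarrow> bool" where
  "admissible x \<longleftrightarrow> (\<forall>t\<ge>0. \<forall>i j. M < i \<longrightarrow> x t i j = 0)
      \<and> (\<forall>t\<ge>0. summable_family M (x t)) \<and> l1_continuous x"

lemma
  assumes "admissible x"
  shows admissible_l1_continuous: "l1_continuous x"
    and admissible_summable: "0 \<le> s \<Longrightarrow> summable_family M (x s)"
    and admissible_vanishes: "0 \<le> s \<Longrightarrow> M < i \<Longrightarrow> x s i j = 0"
  using assms unfolding admissible_def by auto

lemma admissible_eq_if_l1dist_le_zero:
  assumes x: "admissible x" and y: "admissible y" and t: "0 \<le> t" and le: "l1dist M (x t) (y t) \<le> 0"
  shows "x t = y t"
proof (intro ext)
  fix i j
  show "x t i j = y t i j"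
  proof (cases "i \<le> M")
    case True
    have "\<bar>x t i j - y t i j\<bar> \<le> l1dist M (x t) (y t)"
      by (rule abs_le_l1norm[OF summable_family_diff[OF admissible_summable[OF x t]
            admissible_summable[OF y t]] True])
    with le show ?thesis by simp
  qed (use admissible_vanishes[OF x t] admissible_vanishes[OF y t] in simp)
qed

lemma l1_continuous_zero: "l1_continuous (\<lambda>s i j. 0)"
  unfolding l1_continuous_def l1norm_def by simp

lemma admissible_zero: "admissible (\<lambda>s i j. 0)"
  unfolding admissible_def using l1_continuous_zero summable_family_zero by auto

lemma l1_continuousI:
  assumes summable: "\<And>s. 0 \<le> s \<Longrightarrow> summable_family M (z s)"
    and dominated: "\<And>t. 0 \<le> t \<Longrightarrow> \<exists>H. continuous_on {0..t+1} H
      \<and> (\<forall>s\<in>{0..t+1}. l1dist M (z s) (z t) \<le> \<bar>H s - H t\<bar>)"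
  shows "l1_continuous z"
  unfolding l1_continuous_def
proof (intro allI impI)
  fix t :: real assume t: "0 \<le> t"
  obtain H where H: "continuous_on {0..t+1} H"
    "\<And>s. s \<in> {0..t+1} \<Longrightarrow> l1dist M (z s) (z t) \<le> \<bar>H s - H t\<bar>"
    using dominated[OF t] by blast
  define c where "c s = min (t + 1) (max 0 s)" for s :: real
  have c: "continuous_on UNIV c" unfolding c_def by (intro continuous_intros)
  have "continuous_on UNIV (\<lambda>s. H (c s))"
    by (rule continuous_on_compose2[OF H(1) c]) (use t in \<open>auto simp: c_def\<close>)
  then have "((\<lambda>s. H (c s)) \<longlongrightarrow> H (c t)) (at t within UNIV)"
    unfolding continuous_on_def by blast
  then have "((\<lambda>s. H (c s)) \<longlongrightarrow> H (c t)) (at t within {0..})"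
    by (rule tendsto_within_subset) auto
  then have "((\<lambda>s. \<bar>H (c s) - H t\<bar>) \<longlongrightarrow> \<bar>H (c t) - H t\<bar>) (at t within {0..})"
    by (intro tendsto_intros)
  moreover have "c t = t" using t by (simp add: c_def)
  ultimately have lim: "((\<lambda>s. \<bar>H (c s) - H t\<bar>) \<longlongrightarrow> 0) (at t within {0..})" by simp
  have "eventually (\<lambda>s. norm (l1dist M (z s) (z t)) \<le> \<bar>H (c s) - H t\<bar>) (at t within {0..})"
    unfolding eventually_at
  proof (intro exI[of _ 1] conjI ballI impI)
    fix s :: real assume s: "s \<in> {0..}" "s \<noteq> t \<and> dist s t < 1"
    then have "s \<in> {0..t+1}" "c s = s" using t by (auto simp: dist_real_def c_def)
    moreover have "0 \<le> l1dist M (z s) (z t)"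
      using summable s t by (intro l1norm_nonneg summable_family_diff) auto
    ultimately show "norm (l1dist M (z s) (z t)) \<le> \<bar>H (c s) - H t\<bar>" using H(2) by simp
  qed simp
  then show "((\<lambda>s. l1dist M (z s) (z t)) \<longlongrightarrow> 0) (at t within {0..})"
    by (rule Lim_null_comparison[OF _ lim])
qed

lemma continuous_on_if_l1_controlled:
  assumes x: "l1_continuous x" and y: "l1_continuous y" and C: "0 \<le> C"
    and le: "\<And>s t. 0 \<le> s \<Longrightarrow> 0 \<le> t \<Longrightarrow> \<bar>g s - g t\<bar> \<le> C * l1dist M (x s) (x t) + C * l1dist M (y s) (y t)"
  shows "continuous_on {0..} g"
  unfolding continuous_on_def
proof (intro ballI)
  fix t :: real assume t: "t \<in> {0..}"
  have lim: "((\<lambda>s. C * l1dist M (x s) (x t) + C * l1dist M (y s) (y t)) \<longlongrightarrow> C * 0 + C * 0)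
      (at t within {0..})"
    using x y t unfolding l1_continuous_def by (intro tendsto_intros) auto
  have "eventually (\<lambda>s. norm (g s - g t) \<le> C * l1dist M (x s) (x t) + C * l1dist M (y s) (y t))
      (at t within {0..})"
    unfolding eventually_at_filter using le t by (auto intro!: always_eventually)
  then have "((\<lambda>s. g s - g t) \<longlongrightarrow> 0) (at t within {0..})"
    by (rule Lim_null_comparison) (use lim in simp)
  then show "(g \<longlongrightarrow> g t) (at t within {0..})" by (simp add: LIM_zero_iff)
qed

lemma continuous_on_l1dist:
  assumes x: "l1_continuous x" "\<And>t. 0 \<le> t \<Longrightarrow> summable_family M (x t)"
    and y: "l1_continuous y" "\<And>t. 0 \<le> t \<Longrightarrow> summable_family M (y t)"
  shows "continuous_on {0..} (\<lambda>s. l1dist M (x s) (y s))"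
proof (rule continuous_on_if_l1_controlled[OF x(1) y(1), of 1])
  fix s t :: real assume st: "0 \<le> s" "0 \<le> t"
  have "\<bar>l1dist M (x s) (y s) - l1dist M (x t) (y t)\<bar>
      \<le> l1norm M (\<lambda>i j. (x s i j - y s i j) - (x t i j - y t i j))"
    by (rule abs_l1norm_diff_le[OF summable_family_diff[OF x(2) y(2)] summable_family_diff[OF x(2) y(2)]])
       (use st in simp_all)
  also have "\<dots> \<le> l1dist M (x s) (x t) + l1dist M (y s) (y t)"
    by (rule l1norm_le_add_if_dominated[OF summable_family_diff[OF x(2) x(2)] summable_family_diff[OF y(2) y(2)]])
       (use st in auto)
  finally show "\<bar>l1dist M (x s) (y s) - l1dist M (x t) (y t)\<bar>
      \<le> 1 * l1dist M (x s) (x t) + 1 * l1dist M (y s) (y t)" by simp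
qed simp

lemma continuous_on_l1norm:
  assumes "l1_continuous x" "\<And>t. 0 \<le> t \<Longrightarrow> summable_family M (x t)"
  shows "continuous_on {0..} (\<lambda>s. l1norm M (x s))"
  using continuous_on_l1dist[OF assms l1_continuous_zero summable_family_zero] by simp

lemma continuous_on_component:
  assumes "l1_continuous x" "\<And>t. 0 \<le> t \<Longrightarrow> summable_family M (x t)" "i \<le> M"
  shows "continuous_on {0..} (\<lambda>s. x s i j)"
proof (rule continuous_on_if_l1_controlled[OF assms(1,1), of "1/2"])
  fix s t :: real assume "0 \<le> s" "0 \<le> t"
  then show "\<bar>x s i j - x t i j\<bar> \<le> 1/2 * l1dist M (x s) (x t) + 1/2 * l1dist M (x s) (x t)"
    using abs_le_l1norm[OF summable_family_diff[OF assms(2,2)] assms(3), of s t j] by simp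
qed simp

lemma rhs_integrable:
  assumes x: "l1_continuous x" "\<And>t. 0 \<le> t \<Longrightarrow> summable_family M (x t)" and i: "i \<le> M"
  shows "(\<lambda>s. rhs s (x s) i j) integrable_on {0..t}"
proof -
  have "continuous_on {0..} (\<lambda>s. mu_term (pos_part (x s)) i j)"
  proof (rule continuous_on_if_l1_controlled[OF x(1,1), of Bm])
    fix s t :: real assume "0 \<le> s" "0 \<le> t"
    then show "\<bar>mu_term (pos_part (x s)) i j - mu_term (pos_part (x t)) i j\<bar>
        \<le> Bm * l1dist M (x s) (x t) + Bm * l1dist M (x s) (x t)"
      using abs_mu_term_diff_le[OF x(2) x(2) i, of s t j] by simp
  qed (rule Bm_nonneg)
  then have mu: "(\<lambda>s. mu_term (pos_part (x s)) i j) integrable_on {0..t}"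
    by (rule integrable_continuous_real[OF continuous_on_subset]) auto
  have transfer_cont: "continuous_on {0..} (\<lambda>s. transfer_term (pos_part (x s)) i' j)"
    if "i' \<le> M" for i'
  proof (rule continuous_on_if_l1_controlled[OF x(1,1), of "fu * row_lip / 2"])
    fix s t :: real assume "0 \<le> s" "0 \<le> t"
    then show "\<bar>transfer_term (pos_part (x s)) i' j - transfer_term (pos_part (x t)) i' j\<bar>
        \<le> fu * row_lip / 2 * l1dist M (x s) (x t) + fu * row_lip / 2 * l1dist M (x s) (x t)"
      using abs_transfer_term_diff_le[OF x(2) x(2) that, of s t j] by simp
  qed (use fu_pos row_lip_pos in simp)
  have transfer: "(\<lambda>s. lam s i' * transfer_term (pos_part (x s)) i' j) integrable_on {0..t}"
    if "i' \<le> M" for i'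
    by (rule integrable_lam_mult[OF that continuous_on_subset[OF transfer_cont[OF that]]]) auto
  have inflow: "(\<lambda>s. if 1 \<le> i then lam s (i - 1) * transfer_term (pos_part (x s)) (i - 1) j else 0)
      integrable_on {0..t}"
    by (cases "1 \<le> i") (use transfer[of "i - 1"] i in auto)
  have outflow: "(\<lambda>s. if i \<le> M - 1 then lam s i * transfer_term (pos_part (x s)) i j else 0)
      integrable_on {0..t}"
    by (cases "i \<le> M - 1") (use transfer[of i] i in auto)
  show ?thesis unfolding Psi_eq by (intro integrable_diff integrable_add mu inflow outflow)
qed

end

section \<open>Picard iteration\<close>

locale psi_problem = psi_coefficients +
  fixes x0 y0 :: nat
  assumes x0_le: "x0 \<le> M"
begin

definition lam_sup :: "real \<Rightarrow> real" where
  "lam_sup T = (SOME B. 0 \<le> B \<and> (\<forall>s\<in>{0..T}. \<forall>x\<le>M. \<bar>lam s x\<bar> \<le> B))"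

lemma lam_sup_nonneg: "0 \<le> lam_sup T"
  and abs_lam_le_lam_sup: "s \<in> {0..T} \<Longrightarrow> x \<le> M \<Longrightarrow> \<bar>lam s x\<bar> \<le> lam_sup T"
  using someI_ex[OF lam_bounded[of T]] unfolding lam_sup_def by auto

definition lip :: "real \<Rightarrow> real" where
  "lip T = rhs_lip (lam_sup T)"

lemma lip_nonneg: "0 \<le> lip T"
  unfolding lip_def rhs_lip_def using lam_sup_nonneg[of T] Bm_nonneg fu_pos row_lip_pos by simp

lemma is_solution_iff:
  "is_solution M lam f mu x0 y0 P \<longleftrightarrow> admissible P \<and>
     (\<forall>t\<ge>0. \<forall>i\<le>M. \<forall>j. ((\<lambda>s. rhs s (P s) i j) has_integral (P t i j - P0 x0 y0 i j)) {0..t})"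
  unfolding is_solution_def admissible_def l1_continuous_def by auto

lemma admissible_P0: "admissible (\<lambda>t. P0 x0 y0)"
  unfolding admissible_def l1_continuous_def l1norm_def
  using summable_family_P0 P0_vanishes[OF x0_le] by auto

lemma admissible_rhs_integrable:
  assumes "admissible x" "i \<le> M"
  shows "(\<lambda>s. rhs s (x s) i j) integrable_on {0..t}"
  using assms by (intro rhs_integrable admissible_l1_continuous admissible_summable)

definition picard_step :: "(real \<Rightarrow> family) \<Rightarrow> real \<Rightarrow> family" where
  "picard_step x t = (\<lambda>i j. if i \<le> M
     then P0 x0 y0 i j + integral {0..t} (\<lambda>s. rhs s (x s) i j) else 0)"

definition picard :: "nat \<Rightarrow> real \<Rightarrow> family" where
  "picard n = (picard_step ^^ n) (\<lambda>t. P0 x0 y0)"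

lemma partial_sums_integral_rhs_diff_le:
  assumes x: "admissible x" and y: "admissible y" and ab: "0 \<le> a" "a \<le> b" "b \<le> T"
  shows "(\<Sum>i\<le>M. \<Sum>j<J. \<bar>integral {a..b} (\<lambda>s. rhs s (x s) i j) - integral {a..b} (\<lambda>s. rhs s (y s) i j)\<bar>)
    \<le> integral {a..b} (\<lambda>s. lip T * l1dist M (x s) (y s))"
proof (rule partial_sums_abs_integral_le)
  have sub: "{a..b} \<subseteq> {0..b}" using ab by auto
  fix i j assume i: "i \<le> M"
  show "((\<lambda>s. rhs s (x s) i j - rhs s (y s) i j) has_integral
      (integral {a..b} (\<lambda>s. rhs s (x s) i j) - integral {a..b} (\<lambda>s. rhs s (y s) i j))) {a..b}"
    using x y i
    by (intro has_integral_diff integrable_integral integrable_subinterval_real[OF _ sub]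
        admissible_rhs_integrable)
next
  have "continuous_on {0..} (\<lambda>s. l1dist M (x s) (y s))"
    using x y by (intro continuous_on_l1dist admissible_l1_continuous admissible_summable)
  then have "continuous_on {a..b} (\<lambda>s. l1dist M (x s) (y s))"
    by (rule continuous_on_subset) (use ab in auto)
  then show "(\<lambda>s. lip T * l1dist M (x s) (y s)) integrable_on {a..b}"
    by (intro integrable_continuous_real continuous_intros)
next
  fix s J assume "s \<in> {a..b}"
  with ab show "(\<Sum>i\<le>M. \<Sum>j<J. \<bar>rhs s (x s) i j - rhs s (y s) i j\<bar>) \<le> lip T * l1dist M (x s) (y s)"
    unfolding lip_def
    by (intro partial_sums_rhs_diff_le admissible_summable x y abs_lam_le_lam_sup) auto
qed

lemma picard_step_diff:
  assumes x: "admissible x" and ab: "0 \<le> a" "a \<le> b" and i: "i \<le> M"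
  shows "picard_step x b i j - picard_step x a i j = integral {a..b} (\<lambda>s. rhs s (x s) i j)"
proof -
  from Henstock_Kurzweil_Integration.integral_combine[OF ab admissible_rhs_integrable[OF x i, of j b]] show ?thesis
    using i by (simp add: picard_step_def)
qed

lemma
  assumes x: "admissible x" and ab: "0 \<le> a" "a \<le> b" "b \<le> T"
  shows summable_family_picard_step_diff:
      "summable_family M (\<lambda>i j. picard_step x b i j - picard_step x a i j)"
    and l1dist_picard_step_le:
      "l1dist M (picard_step x b) (picard_step x a) \<le> integral {a..b} (\<lambda>s. lip T * l1norm M (x s))"
proof -
  have "(\<Sum>i\<le>M. \<Sum>j<J. \<bar>picard_step x b i j - picard_step x a i j\<bar>)
      \<le> integral {a..b} (\<lambda>s. lip T * l1norm M (x s))" for J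
    using partial_sums_integral_rhs_diff_le[OF x admissible_zero ab, of J]
    by (simp add: picard_step_diff[OF x ab(1,2)] rhs_zero)
  then show "summable_family M (\<lambda>i j. picard_step x b i j - picard_step x a i j)"
    and "l1dist M (picard_step x b) (picard_step x a) \<le> integral {a..b} (\<lambda>s. lip T * l1norm M (x s))"
    by (auto intro: summable_family_if_partial_sums_le l1norm_le_if_partial_sums_le)
qed

lemma picard_step_0: "picard_step x 0 = P0 x0 y0"
  unfolding picard_step_def using P0_vanishes[OF x0_le] by (auto simp: fun_eq_iff)

lemma summable_family_picard_step:
  assumes "admissible x" "0 \<le> t"
  shows "summable_family M (picard_step x t)"
proof (rule summable_family_dominated[OF summable_family_P0[of M x0 y0]
      summable_family_picard_step_diff[OF assms(1) order_refl assms(2) order_refl]])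
  fix i j
  show "\<bar>picard_step x t i j\<bar> \<le> \<bar>P0 x0 y0 i j\<bar> + \<bar>picard_step x t i j - picard_step x 0 i j\<bar>"
    using abs_triangle_ineq[of "P0 x0 y0 i j" "picard_step x t i j - P0 x0 y0 i j"]
    by (simp add: picard_step_0)
qed

lemma admissible_picard_step:
  assumes x: "admissible x"
  shows "admissible (picard_step x)"
  unfolding admissible_def
proof (intro conjI allI impI)
  show "picard_step x t i j = 0" if "M < i" for t i j using that by (simp add: picard_step_def)
  show "summable_family M (picard_step x t)" if "0 \<le> t" for t
    by (rule summable_family_picard_step[OF x that])
  show "l1_continuous (picard_step x)"
  proof (rule l1_continuousI)
    show "summable_family M (picard_step x s)" if "0 \<le> s" for s
      by (rule summable_family_picard_step[OF x that])
    fix t :: real assume t: "0 \<le> t"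
    define h where "h = (\<lambda>s. lip (t + 1) * l1norm M (x s))"
    have "continuous_on {0..} h"
      unfolding h_def using x
      by (intro continuous_intros continuous_on_l1norm admissible_l1_continuous admissible_summable)
    then have h: "h integrable_on {0..u}" for u
      by (rule integrable_continuous_real[OF continuous_on_subset]) auto
    define H where "H u = integral {0..u} h" for u
    have H: "integral {a..b} h = H b - H a" if "0 \<le> a" "a \<le> b" for a b
      using Henstock_Kurzweil_Integration.integral_combine[OF that h[of b]] unfolding H_def by simp
    have "l1dist M (picard_step x s) (picard_step x t) \<le> \<bar>H s - H t\<bar>" if s: "s \<in> {0..t+1}" for s
    proof (cases "t \<le> s")
      case True
      then show ?thesis
        using l1dist_picard_step_le[OF x t True, of "t + 1"] H[OF t True] s by (simp add: h_def)
    next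
      case False
      then show ?thesis
        using l1dist_picard_step_le[OF x _ _, of s t "t + 1"] H[of s t] s
          l1dist_commute[of M "picard_step x s" "picard_step x t"]
        by (simp add: h_def)
    qed
    moreover have "continuous_on {0..t+1} H"
      unfolding H_def by (rule indefinite_integral_continuous_1[OF h])
    ultimately show "\<exists>H. continuous_on {0..t+1} H
        \<and> (\<forall>s\<in>{0..t+1}. l1dist M (picard_step x s) (picard_step x t) \<le> \<bar>H s - H t\<bar>)"
      by blast
  qed
qed

lemma picard_step_lipschitz:
  assumes x: "admissible x" and y: "admissible y" and t: "0 \<le> t" "t \<le> T"
  shows "l1dist M (picard_step x t) (picard_step y t) \<le> integral {0..t} (\<lambda>s. lip T * l1dist M (x s) (y s))"
  by (rule l1norm_le_if_partial_sums_le)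
     (use partial_sums_integral_rhs_diff_le[OF x y order_refl t] in \<open>simp add: picard_step_def\<close>)

lemma picard_0: "picard 0 = (\<lambda>t. P0 x0 y0)"
  and picard_Suc: "picard (Suc n) = picard_step (picard n)"
  unfolding picard_def by simp_all

lemma admissible_picard: "admissible (picard n)"
  by (induction n) (simp_all add: picard_0 picard_Suc admissible_P0 admissible_picard_step)

definition picard_gap :: "nat \<Rightarrow> real \<Rightarrow> real" where
  "picard_gap n t = l1dist M (picard (Suc n) t) (picard n t)"

definition gap_bound :: "real \<Rightarrow> nat \<Rightarrow> real" where
  "gap_bound T n = lip T * T * (lip T * T) ^ n / fact n"

lemma picard_gap_le:
  assumes t: "t \<in> {0..T}"
  shows "picard_gap n t \<le> gap_bound T n"
proof -
  have "picard_gap n t \<le> lip T * T * (lip T * t) ^ n / fact n"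
  proof (rule iterated_integral_inequality[OF lip_nonneg _ _ _ _ t])
    show "0 \<le> lip T * T" using t lip_nonneg[of T] by simp
  next
    fix t assume t: "t \<in> {0..T}"
    have "picard_gap 0 t \<le> integral {0..t} (\<lambda>s. lip T * l1norm M (P0 x0 y0))"
      unfolding picard_gap_def picard_Suc picard_0
      using l1dist_picard_step_le[OF admissible_P0, of 0 t T] t by (simp add: picard_step_0)
    also have "\<dots> \<le> lip T * T"
      using t lip_nonneg[of T] by (simp add: l1norm_P0[OF x0_le] mult_right_mono mult.commute)
    finally show "picard_gap 0 t \<le> lip T * T" .
  next
    fix n t assume t: "t \<in> {0..T}"
    show "picard_gap (Suc n) t \<le> lip T * integral {0..t} (picard_gap n)"
      unfolding picard_gap_def picard_Suc[of "Suc n"] picard_Suc[of n]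
      using picard_step_lipschitz[OF admissible_picard_step[OF admissible_picard] admissible_picard, of t T] t
      by (simp add: picard_Suc)
  next
    show "continuous_on {0..T} (picard_gap n)" for n
      unfolding picard_gap_def
      by (rule continuous_on_subset[OF continuous_on_l1dist])
         (auto intro: admissible_l1_continuous admissible_summable admissible_picard)
  qed
  also have "\<dots> \<le> gap_bound T n"
    unfolding gap_bound_def using t lip_nonneg[of T]
    by (intro divide_right_mono mult_left_mono power_mono) auto
  finally show ?thesis .
qed

lemma summable_gap_bound: "summable (gap_bound T)"
  using summable_mult[OF summable_exp[of "lip T * T"], of "lip T * T"]
  unfolding gap_bound_def by (simp add: field_simps)

lemma picard_vanishes: "M < i \<Longrightarrow> picard n t i j = 0"
  by (cases n) (simp_all add: picard_0 picard_Suc P0_vanishes[OF x0_le] picard_step_def)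

lemma abs_picard_diff_le:
  assumes t: "t \<in> {0..T}"
  shows "\<bar>picard (Suc n) t i j - picard n t i j\<bar> \<le> gap_bound T n"
proof (cases "i \<le> M")
  case True
  have "\<bar>picard (Suc n) t i j - picard n t i j\<bar> \<le> picard_gap n t"
    unfolding picard_gap_def using t
    by (intro abs_le_l1norm[OF summable_family_diff] True
        admissible_summable[OF admissible_picard]) auto
  with picard_gap_le[OF t, of n] show ?thesis by linarith
next
  case False
  then show ?thesis using t lip_nonneg[of T] by (simp add: picard_vanishes gap_bound_def)
qed

lemma summable_picard_diff:
  assumes "t \<in> {0..T}"
  shows "summable (\<lambda>n. \<bar>picard (Suc n) t i j - picard n t i j\<bar>)"
  by (rule summable_comparison_test'[OF summable_gap_bound]) (use abs_picard_diff_le[OF assms] in auto)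

definition picard_limit :: "real \<Rightarrow> family" where
  "picard_limit t = (\<lambda>i j. P0 x0 y0 i j + (\<Sum>n. picard (Suc n) t i j - picard n t i j))"

lemma picard_eq_telescope: "picard n t i j = P0 x0 y0 i j + (\<Sum>m<n. picard (Suc m) t i j - picard m t i j)"
  using sum_lessThan_telescope[of "\<lambda>n. picard n t i j" n] by (simp add: picard_0)

lemma picard_tendsto_limit:
  assumes "0 \<le> t"
  shows "(\<lambda>n. picard n t i j) \<longlonglongrightarrow> picard_limit t i j"
proof -
  have "summable (\<lambda>n. picard (Suc n) t i j - picard n t i j)"
    using summable_picard_diff[of t t i j] assms by (simp add: summable_rabs_cancel)
  then have "(\<lambda>n. P0 x0 y0 i j + (\<Sum>m<n. picard (Suc m) t i j - picard m t i j))
      \<longlonglongrightarrow> picard_limit t i j"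
    unfolding picard_limit_def by (rule tendsto_add[OF tendsto_const summable_LIMSEQ])
  moreover have "(\<lambda>n. picard n t i j) = (\<lambda>n. P0 x0 y0 i j + (\<Sum>m<n. picard (Suc m) t i j - picard m t i j))"
    by (rule ext) (rule picard_eq_telescope)
  ultimately show ?thesis by simp
qed

definition gap_tail :: "real \<Rightarrow> nat \<Rightarrow> real" where
  "gap_tail T n = (\<Sum>m. gap_bound T (m + n))"

lemma gap_tail_tendsto_zero: "gap_tail T \<longlonglongrightarrow> 0"
  unfolding gap_tail_def by (rule suminf_exist_split2[OF summable_gap_bound])

lemma
  assumes t: "t \<in> {0..T}"
  shows summable_family_picard_limit_diff:
      "summable_family M (\<lambda>i j. picard_limit t i j - picard n t i j)"
    and l1dist_picard_limit_le: "l1dist M (picard_limit t) (picard n t) \<le> gap_tail T n"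
proof -
  let ?d = "\<lambda>m i j. picard (Suc m) t i j - picard m t i j"
  have summable: "summable (\<lambda>m. \<bar>?d (m + n) i j\<bar>)" for i j
    using summable_picard_diff[OF t] by (rule summable_ignore_initial_segment)
  have eq: "picard_limit t i j - picard n t i j = (\<Sum>m. ?d (m + n) i j)" for i j
  proof -
    have "summable (\<lambda>m. ?d m i j)" by (rule summable_rabs_cancel[OF summable_picard_diff[OF t]])
    then have "(\<Sum>m. ?d (m + n) i j) = (\<Sum>m. ?d m i j) - (\<Sum>m<n. ?d m i j)"
      by (rule suminf_minus_initial_segment)
    then show ?thesis using picard_eq_telescope[of n t i j] by (simp add: picard_limit_def)
  qed
  have "(\<Sum>i\<le>M. \<Sum>j<J. \<bar>picard_limit t i j - picard n t i j\<bar>) \<le> gap_tail T n" for J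
  proof -
    have "(\<Sum>i\<le>M. \<Sum>j<J. \<bar>picard_limit t i j - picard n t i j\<bar>)
        \<le> (\<Sum>i\<le>M. \<Sum>j<J. \<Sum>m. \<bar>?d (m + n) i j\<bar>)"
      unfolding eq by (intro sum_mono summable_rabs summable)
    also have "\<dots> = (\<Sum>m. \<Sum>i\<le>M. \<Sum>j<J. \<bar>?d (m + n) i j\<bar>)"
      using summable by (simp add: suminf_sum summable_sum)
    also have "\<dots> \<le> (\<Sum>m. gap_bound T (m + n))"
    proof (rule suminf_le)
      show "(\<Sum>i\<le>M. \<Sum>j<J. \<bar>?d (m + n) i j\<bar>) \<le> gap_bound T (m + n)" for m
        using partial_sums_le_l1norm[OF summable_family_diff, of M "picard (Suc (m + n)) t"
            "picard (m + n) t" J] admissible_summable[OF admissible_picard] picard_gap_le[OF t, of "m + n"] t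
        unfolding picard_gap_def by force
    next
      show "summable (\<lambda>m. \<Sum>i\<le>M. \<Sum>j<J. \<bar>?d (m + n) i j\<bar>)" by (intro summable_sum summable)
      show "summable (\<lambda>m. gap_bound T (m + n))"
        by (rule summable_ignore_initial_segment[OF summable_gap_bound])
    qed
    finally show ?thesis unfolding gap_tail_def .
  qed
  then show "summable_family M (\<lambda>i j. picard_limit t i j - picard n t i j)"
    and "l1dist M (picard_limit t) (picard n t) \<le> gap_tail T n"
    by (auto intro: summable_family_if_partial_sums_le l1norm_le_if_partial_sums_le)
qed

lemma summable_family_picard_limit:
  assumes "0 \<le> t"
  shows "summable_family M (picard_limit t)"
proof (rule summable_family_dominated[OF admissible_summable[OF admissible_picard assms]
      summable_family_picard_limit_diff[of t t 0]])
  fix i j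
  show "\<bar>picard_limit t i j\<bar> \<le> \<bar>picard 0 t i j\<bar> + \<bar>picard_limit t i j - picard 0 t i j\<bar>"
    by linarith
qed (use assms in simp)

lemma l1_continuous_picard_limit: "l1_continuous picard_limit"
  unfolding l1_continuous_def tendsto_iff
proof (intro allI impI)
  fix t e :: real assume t: "0 \<le> t" and e: "0 < e"
  define T where "T = t + 1"
  obtain n where n: "gap_tail T n < e / 4"
    using order_tendstoD(2)[OF gap_tail_tendsto_zero, of "e / 4"] e by (auto simp: eventually_sequentially)
  have "eventually (\<lambda>s. l1dist M (picard n s) (picard n t) < e / 2) (at t within {0..})"
    using order_tendstoD(2)[OF admissible_l1_continuous[OF admissible_picard,
          unfolded l1_continuous_def, rule_format, OF t], of "e / 2"] e
    by simp
  moreover have "eventually (\<lambda>s. s \<in> {0..T}) (at t within {0..})"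
    unfolding eventually_at by (intro exI[of _ 1]) (use t in \<open>auto simp: T_def dist_real_def\<close>)
  ultimately show "eventually (\<lambda>s. dist (l1dist M (picard_limit s) (picard_limit t)) 0 < e) (at t within {0..})"
  proof eventually_elim
    case (elim s)
    have tT: "t \<in> {0..T}" using t by (simp add: T_def)
    have summable: "summable_family M (picard_limit s)" "summable_family M (picard_limit t)"
      "summable_family M (picard n s)" "summable_family M (picard n t)"
      using summable_family_picard_limit admissible_summable[OF admissible_picard] elim t by auto
    have "l1dist M (picard_limit s) (picard_limit t)
        \<le> l1dist M (picard_limit s) (picard n s) + l1dist M (picard n s) (picard_limit t)"
      by (rule l1dist_triangle[OF summable(1,3,2)])
    also have "l1dist M (picard n s) (picard_limit t)
        \<le> l1dist M (picard n s) (picard n t) + l1dist M (picard n t) (picard_limit t)"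
      by (rule l1dist_triangle[OF summable(3,4,2)])
    finally have "l1dist M (picard_limit s) (picard_limit t)
        \<le> gap_tail T n + (l1dist M (picard n s) (picard n t) + gap_tail T n)"
      using l1dist_picard_limit_le[OF elim(2), of n] l1dist_picard_limit_le[OF tT, of n]
        l1dist_commute[of M "picard n t" "picard_limit t"] by linarith
    moreover have "0 \<le> l1dist M (picard_limit s) (picard_limit t)"
      by (intro l1norm_nonneg summable_family_diff summable)
    ultimately show ?case using n elim(1) by (simp add: dist_real_def)
  qed
qed

lemma admissible_picard_limit: "admissible picard_limit"
  unfolding admissible_def
  using summable_family_picard_limit l1_continuous_picard_limit
  by (simp add: picard_limit_def picard_vanishes P0_vanishes[OF x0_le])

lemma abs_integral_rhs_picard_diff_le:
  assumes t: "0 \<le> t" and i: "i \<le> M"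
  shows "\<bar>integral {0..t} (\<lambda>s. rhs s (picard n s) i j) - integral {0..t} (\<lambda>s. rhs s (picard_limit s) i j)\<bar>
    \<le> lip t * t * gap_tail t n"
proof -
  have "\<bar>integral {0..t} (\<lambda>s. rhs s (picard n s) i j) - integral {0..t} (\<lambda>s. rhs s (picard_limit s) i j)\<bar>
      \<le> integral {0..t} (\<lambda>s. lip t * l1dist M (picard n s) (picard_limit s))"
    by (rule order_trans[OF abs_le_partial_sums[OF i] partial_sums_integral_rhs_diff_le[OF
          admissible_picard admissible_picard_limit order_refl t order_refl]])
  also have "\<dots> \<le> integral {0..t} (\<lambda>s. lip t * gap_tail t n)"
  proof (rule integral_le)
    have "continuous_on {0..} (\<lambda>s. l1dist M (picard n s) (picard_limit s))"
      using admissible_picard admissible_picard_limit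
      by (intro continuous_on_l1dist admissible_l1_continuous admissible_summable)
    then have "continuous_on {0..t} (\<lambda>s. l1dist M (picard n s) (picard_limit s))"
      by (rule continuous_on_subset) auto
    then show "(\<lambda>s. lip t * l1dist M (picard n s) (picard_limit s)) integrable_on {0..t}"
      by (intro integrable_continuous_real continuous_intros)
    show "lip t * l1dist M (picard n s) (picard_limit s) \<le> lip t * gap_tail t n" if "s \<in> {0..t}" for s
      using l1dist_picard_limit_le[OF that, of n] lip_nonneg[of t]
        l1dist_commute[of M "picard n s" "picard_limit s"]
      by (simp add: mult_left_mono)
  qed (rule integrable_const_ivl)
  also have "\<dots> = lip t * t * gap_tail t n" using t by simp
  finally show ?thesis .
qed

lemma picard_limit_has_integral:
  assumes t: "0 \<le> t" and i: "i \<le> M"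
  shows "((\<lambda>s. rhs s (picard_limit s) i j) has_integral (picard_limit t i j - P0 x0 y0 i j)) {0..t}"
proof -
  define I where "I = integral {0..t} (\<lambda>s. rhs s (picard_limit s) i j)"
  have "(\<lambda>n. integral {0..t} (\<lambda>s. rhs s (picard n s) i j) - I) \<longlonglongrightarrow> 0"
    by (rule Lim_null_comparison[OF always_eventually
          tendsto_mult_right_zero[OF gap_tail_tendsto_zero[of t], of "lip t * t"]])
       (use abs_integral_rhs_picard_diff_le[OF t i] in \<open>simp add: I_def\<close>)
  moreover have "integral {0..t} (\<lambda>s. rhs s (picard n s) i j) = picard (Suc n) t i j - P0 x0 y0 i j" for n
    unfolding picard_Suc picard_step_def using i by simp
  ultimately have "(\<lambda>n. picard (Suc n) t i j - P0 x0 y0 i j) \<longlonglongrightarrow> I"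
    by (simp add: LIM_zero_iff)
  moreover have "(\<lambda>n. picard (Suc n) t i j - P0 x0 y0 i j) \<longlonglongrightarrow> picard_limit t i j - P0 x0 y0 i j"
    by (intro tendsto_diff tendsto_const LIMSEQ_Suc[OF picard_tendsto_limit[OF t]])
  ultimately have "I = picard_limit t i j - P0 x0 y0 i j" by (rule LIMSEQ_unique)
  then show ?thesis
    using admissible_rhs_integrable[OF admissible_picard_limit i, of j t] unfolding I_def
    by (simp add: has_integral_integral)
qed

lemma picard_limit_solution: "is_solution M lam f mu x0 y0 picard_limit"
  unfolding is_solution_iff using admissible_picard_limit picard_limit_has_integral by blast

section \<open>Uniqueness, positivity and conservation of mass\<close>

lemma
  assumes "is_solution M lam f mu x0 y0 P"
  shows solution_admissible: "admissible P"
    and solution_has_integral: "0 \<le> t \<Longrightarrow> i \<le> M \<Longrightarrow>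
      ((\<lambda>s. rhs s (P s) i j) has_integral (P t i j - P0 x0 y0 i j)) {0..t}"
  using assms unfolding is_solution_iff by auto

lemma solution_fixed_point:
  assumes P: "is_solution M lam f mu x0 y0 P" and t: "0 \<le> t"
  shows "picard_step P t = P t"
  unfolding picard_step_def
  using integral_unique[OF solution_has_integral[OF P t]]
    admissible_vanishes[OF solution_admissible[OF P] t]
  by (auto simp: fun_eq_iff)

lemma solution_unique:
  assumes Q: "is_solution M lam f mu x0 y0 Q" and R: "is_solution M lam f mu x0 y0 R" and t: "0 \<le> t"
  shows "Q t = R t"
proof -
  note admissible = solution_admissible[OF Q] solution_admissible[OF R]
  define u where "u = (\<lambda>s. l1dist M (Q s) (R s))"
  have u_cont: "continuous_on {0..t} u"
    unfolding u_def using admissible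
    by (intro continuous_on_subset[OF continuous_on_l1dist]) (auto intro: admissible_l1_continuous admissible_summable)
  then obtain K where K: "\<And>s. s \<in> {0..t} \<Longrightarrow> \<bar>u s\<bar> \<le> K"
    using compact_imp_bounded[OF compact_continuous_image[OF u_cont compact_Icc]]
    unfolding bounded_iff by fastforce
  have bound: "u t \<le> K * (lip t * t) ^ n / fact n" for n
  proof (rule iterated_integral_inequality[where a = "\<lambda>_. u", OF lip_nonneg])
    show "0 \<le> K" using K[of 0] t by fastforce
    show "u s \<le> K" if "s \<in> {0..t}" for s using K[OF that] by linarith
    show "u s \<le> lip t * integral {0..s} u" if "s \<in> {0..t}" for s
      using picard_step_lipschitz[OF admissible, of s t] that
      by (simp add: u_def solution_fixed_point[OF Q] solution_fixed_point[OF R])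
  qed (use t u_cont in auto)
  have "(\<lambda>n. K * (lip t * t) ^ n / fact n) \<longlonglongrightarrow> 0"
    using tendsto_mult_right_zero[OF summable_LIMSEQ_zero[OF summable_exp[of "lip t * t"]], of K]
    by (simp add: field_simps)
  then have "u t \<le> 0" by (rule LIMSEQ_le_const) (use bound in auto)
  then show ?thesis unfolding u_def by (rule admissible_eq_if_l1dist_le_zero[OF admissible t])
qed

lemma solution_has_integral_between:
  assumes P: "is_solution M lam f mu x0 y0 P" and ab: "0 \<le> a" "a \<le> b" and i: "i \<le> M"
  shows "((\<lambda>s. rhs s (P s) i j) has_integral (P b i j - P a i j)) {a..b}"
proof -
  let ?f = "\<lambda>s. rhs s (P s) i j"
  have b: "0 \<le> b" using ab by simp
  have int: "?f integrable_on {0..b}" using solution_has_integral[OF P b i] by blast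
  have "integral {0..a} ?f + integral {a..b} ?f = integral {0..b} ?f"
    by (rule Henstock_Kurzweil_Integration.integral_combine[OF ab int])
  then have "integral {a..b} ?f = P b i j - P a i j"
    using integral_unique[OF solution_has_integral[OF P ab(1) i]]
      integral_unique[OF solution_has_integral[OF P b i]] by simp
  moreover have "?f integrable_on {a..b}"
    by (rule integrable_subinterval_real[OF int]) (use ab in simp)
  ultimately show ?thesis using integrable_integral by metis
qed

lemma solution_nonneg:
  assumes P: "is_solution M lam f mu x0 y0 P" and t: "0 \<le> t"
  shows "0 \<le> P t i j"
proof (cases "i \<le> M")
  case i: True
  note admissible = solution_admissible[OF P]
  show ?thesis
  proof (rule nonneg_if_nondecreasing_where_negative[OF t, where g = "\<lambda>s. P s i j"])
    show "continuous_on {0..t} (\<lambda>s. P s i j)"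
      using admissible i
      by (intro continuous_on_subset[OF continuous_on_component]) (auto intro: admissible_l1_continuous admissible_summable)
    show "0 \<le> P 0 i j"
      using integral_unique[OF solution_has_integral[OF P order_refl i, of j]] by (simp add: P0_nonneg)
    show "((\<lambda>s. rhs s (P s) i j) has_integral P b i j - P a i j) {a..b}"
      if "0 \<le> a" "a \<le> b" "b \<le> t" for a b
      by (rule solution_has_integral_between[OF P that(1,2) i])
    show "0 \<le> rhs s (P s) i j" if "s \<in> {0..t}" "P s i j < 0" for s
      using that admissible_summable[OF admissible] i by (intro rhs_nonneg_where_nonpos) auto
  qed
qed (use admissible_vanishes[OF solution_admissible[OF P] t] in simp)

lemma solution_partial_sums_tendsto_initial:
  assumes P: "is_solution M lam f mu x0 y0 P" and t: "0 \<le> t"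
  shows "(\<lambda>J. \<Sum>i\<le>M. \<Sum>j<J. P t i j - P0 x0 y0 i j) \<longlonglongrightarrow> 0"
proof -
  note admissible = solution_admissible[OF P]
  define S where "S J s = (\<Sum>i\<le>M. \<Sum>j<J. rhs s (P s) i j)" for J s
  have S: "(S J has_integral (\<Sum>i\<le>M. \<Sum>j<J. P t i j - P0 x0 y0 i j)) {0..t}" for J
    unfolding S_def by (intro has_integral_sum solution_has_integral[OF P t]) auto
  have "continuous_on {0..} (\<lambda>s. lip t * l1norm M (P s))"
    using admissible by (intro continuous_intros continuous_on_l1norm admissible_l1_continuous admissible_summable)
  then have dominating: "(\<lambda>s. lip t * l1norm M (P s)) integrable_on {0..t}"
    by (rule integrable_continuous_real[OF continuous_on_subset]) auto
  have "(\<lambda>J. integral {0..t} (S J)) \<longlonglongrightarrow> integral {0..t} (\<lambda>s. 0)"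
  proof (rule dominated_convergence(2)[OF _ dominating])
    show "S J integrable_on {0..t}" for J using S by blast
    fix J s assume s: "s \<in> {0..t}"
    have "norm (S J s) \<le> (\<Sum>i\<le>M. \<Sum>j<J. \<bar>rhs s (P s) i j\<bar>)"
      unfolding S_def real_norm_def by (rule order_trans[OF sum_abs sum_mono[OF order_trans[OF sum_abs]]]) simp
    also have "\<dots> \<le> lip t * l1norm M (P s)"
      unfolding lip_def using s
      by (intro partial_sums_rhs_le admissible_summable[OF admissible] abs_lam_le_lam_sup) auto
    finally show "norm (S J s) \<le> lip t * l1norm M (P s)" .
    show "(\<lambda>J. S J s) \<longlonglongrightarrow> 0"
      unfolding S_def using s by (intro partial_sums_rhs_tendsto_zero admissible_summable[OF admissible]) auto
  qed
  then show ?thesis using integral_unique[OF S] by simp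
qed

lemma solution_l1norm:
  assumes P: "is_solution M lam f mu x0 y0 P" and t: "0 \<le> t"
  shows "l1norm M (P t) = 1"
proof -
  have "(\<lambda>J. (\<Sum>i\<le>M. \<Sum>j<J. P t i j) - (\<Sum>i\<le>M. \<Sum>j<J. P0 x0 y0 i j))
      \<longlonglongrightarrow> l1norm M (P t) - l1norm M (P0 x0 y0)"
    using admissible_summable[OF solution_admissible[OF P] t] solution_nonneg[OF P t]
    by (intro tendsto_diff partial_sums_tendsto_l1norm summable_family_P0 P0_nonneg)
  moreover have "(\<lambda>J. (\<Sum>i\<le>M. \<Sum>j<J. P t i j) - (\<Sum>i\<le>M. \<Sum>j<J. P0 x0 y0 i j))
      \<longlonglongrightarrow> 0"
    using solution_partial_sums_tendsto_initial[OF P t] by (simp add: sum_subtractf)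
  ultimately show ?thesis using LIMSEQ_unique l1norm_P0[OF x0_le] by fastforce
qed

end

theorem proposition3:
  fixes M :: nat and x0 y0 :: nat
    and lam :: "real \<Rightarrow> nat \<Rightarrow> real"
    and f :: "real \<Rightarrow> real"
    and mu :: "nat \<Rightarrow> nat \<Rightarrow> nat \<Rightarrow> real"
  assumes M_pos: "1 \<le> M"
    and x0: "x0 \<le> M"
    and lam_nonneg: "\<forall>t\<ge>0. \<forall>x\<le>M. 0 \<le> lam t x"
    and lam_cadlag: "\<forall>x\<le>M. cadlag_on_nonneg (\<lambda>t. lam t x)"
    and lam_M: "\<forall>t\<ge>0. lam t M = 0"
    and lam_bdd: "\<forall>T>0. \<exists>B. \<forall>t\<in>{0..T}. \<forall>x\<le>M. \<bar>lam t x\<bar> \<le> B"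
    and f_cont: "continuous_on UNIV f"
    and f_bounds: "\<exists>fl fu. 0 < fl \<and> (\<forall>x. fl \<le> f x \<and> f x \<le> fu)"
    and mu_offdiag: "\<forall>k\<le>M. \<forall>i j. i \<noteq> j \<longrightarrow> 0 \<le> mu k i j"
    and mu_diag: "\<forall>k\<le>M. \<forall>i. mu k i i \<le> 0"
    and mu_rows: "\<forall>k\<le>M. \<forall>i. summable (\<lambda>j. mu k i j) \<and> (\<Sum>j. mu k i j) = 0"
    and mu_bdd: "\<forall>k\<le>M. \<exists>B. \<forall>i. \<bar>mu k i i\<bar> \<le> B"
  shows "\<exists>P. is_solution M lam f mu x0 y0 P
            \<and> (\<forall>Q. is_solution M lam f mu x0 y0 Q \<longrightarrow> (\<forall>t\<ge>0. Q t = P t))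
            \<and> (\<forall>t\<ge>0. (\<forall>i j. 0 \<le> P t i j) \<and> l1norm M (P t) = 1)"
proof -
  obtain fl fu where f: "0 < fl" "\<And>r. fl \<le> f r" "\<And>r. f r \<le> fu" using f_bounds by blast
  obtain B where B: "\<And>k i. k \<le> M \<Longrightarrow> \<bar>mu k i i\<bar> \<le> B k" using mu_bdd by metis
  have "\<bar>mu k i i\<bar> \<le> (\<Sum>k\<le>M. \<bar>B k\<bar>)" if "k \<le> M" for k i
    using B[OF that, of i] member_le_sum[of k "{..M}" "\<lambda>k. \<bar>B k\<bar>"] that by fastforce
  then interpret psi_problem M lam f mu fl fu "\<Sum>k\<le>M. \<bar>B k\<bar>" x0 y0
    using M_pos x0 lam_nonneg lam_cadlag lam_bdd f mu_offdiag mu_diag mu_rows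
    by unfold_locales (auto simp: cadlag_on_nonneg_def)
  show ?thesis
    using picard_limit_solution solution_unique solution_nonneg solution_l1norm by blast
qed

end
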